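(* In the setting below, suppose condition (B) holds: there exist $C>0$, $R>0$ and $M\in\mathbb{N}$ such that for all $r\in(0,R)$ and all integers $m\ge M$, if $\mathbb{P}_X(S_r)>0$ then $$\mathbb{E}\big[|\eta(X^x_m)-\eta(x)|\ \big|\ X^x_m\in S_r\big]\le C\,\mathbb{E}\big[|\eta(X)-\eta(x)|\ \big|\ X\in S_r\big].$$ If $x$ is a Lebesgue point for $\eta$ with respect to $\mathbb{P}_X$, then $\mathbb{E}[|\eta(X^x_m)-\eta(x)|]\to 0$ as $m\to\infty$.
   Context: Let $(\mathcal{X},d)$ be a metric space with its Borel $\sigma$-algebra, let $(\Omega,\mathcal{F},\mathbb{P})$ be a probability space, and let $X,X_1,X_2,\dots$ be i.i.d. $\mathcal{X}$-valued random variables with common law $\mathbb{P}_X$. For $x\in\mathcal{X}$ and $r>0$ write $\bar B_r=\{x':d(x,x')\le r\}$ and $S_r=\{x':d(x,x')=r\}$. The support of $\mathbb{P}_X$ is the set of $x$ such that $\mathbb{P}_X(\bar B_r(x))>0$ for all $r>0$. Fix $x$ in the support of $\mathbb{P}_X$ and a bounded measurable $\eta:\mathcal{X}\to\mathbb{R}$. For each $m\in\mathbb{N}$, a nearest neighbor of $x$ among $X_1,\dots,X_m$ is a measurable $X^x_m:\Omega\to\mathcal{X}$ with $X^x_m(\omega)\in\arg\min_{x'\in\{X_1(\omega),\dots,X_m(\omega)\}}d(x,x')$ for every $\omega\in\Omega$; fix such a sequence $(X^x_m)_{m\in\mathbb{N}}$. Conditional expectations given an event $A$ of positive probability mean $\mathbb{E}[Z\mid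 A]=\mathbb{E}[Z\mathbb{I}_A]/\mathbb{P}(A)$ (note $\mathbb{P}_X(S_r)>0$ iff $\mathbb{P}(X^x_m\in S_r)>0$). The point $x$ is a Lebesgue point if $\mathbb{E}[\mathbb{I}_{\bar B_r}(X)\,|\eta(X)-\eta(x)|]/\mathbb{P}_X(\bar B_r)\to 0$ as $r\to 0^+$. *)

theory Defs
  imports "HOL-Probability.Probability"
begin

end

theory Submission
  imports Defs
begin

text \<open>Split the error at a small radius \<open>\<delta>\<close>. Beyond \<open>\<delta>\<close> the integrand is bounded, and the
  nearest neighbour lies that far only if all \<open>m\<close> samples do, which has probability
  \<open>(1 - P(d(x,X) \<le> \<delta>))^m \<rightarrow> 0\<close> because \<open>x\<close> is in the support. Within \<open>\<delta>\<close>, the law of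
  \<open>d(x, X_m)\<close> has a density \<open>k_m\<close> with respect to that of \<open>d(x,X)\<close>: the ratio of point masses on
  the countably many radii charged by \<open>d(x,X)\<close>, and \<open>m P(d(x,X) \<ge> r)^(m-1)\<close> elsewhere. On the
  charged radii condition (B) bounds the error of the nearest neighbour by \<open>C\<close> times that of
  \<open>X\<close>; elsewhere a union bound over the index of the nearest sample does so with constant 1.
  Finally \<open>k_m\<close> is antitone with total mass at most 2, so by the layer cake formula the
  \<open>k_m\<close>-weighted error of \<open>X\<close> is a mixture of its mean errors on balls of radius at most \<open>\<delta>\<close>,
  which are small at a Lebesgue point.\<close>

section \<open>Measure-theoretic preliminaries\<close>

lemma power_diff_div_bounds:
  fixes a b :: real
  assumes "0 \<le> b" "b < a"
  shows "real m * b^(m-1) \<le> (a^m - b^m)/(a-b)" "(a^m - b^m)/(a-b) \<le> real m * a^(m-1)"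
proof -
  have sum_eq: "(a^m - b^m)/(a-b) = (\<Sum>i<m. b^(m - Suc i) * a^i)"
    using assms by (simp add: power_diff_sumr2)
  have lower: "b^(m-1) \<le> b^(m - Suc i) * a^i" if "i < m" for i
  proof -
    have "b^(m-1) = b^(m - Suc i) * b^i" using that by (simp add: power_add[symmetric])
    also have "\<dots> \<le> b^(m - Suc i) * a^i"
      using assms by (intro mult_left_mono power_mono) auto
    finally show ?thesis .
  qed
  have upper: "b^(m - Suc i) * a^i \<le> a^(m-1)" if "i < m" for i
  proof -
    have "b^(m - Suc i) * a^i \<le> a^(m - Suc i) * a^i"
      using assms by (intro mult_right_mono power_mono) auto
    also have "\<dots> = a^(m-1)" using that by (simp add: power_add[symmetric])
    finally show ?thesis .
  qed
  show "real m * b^(m-1) \<le> (a^m - b^m)/(a-b)"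
    unfolding sum_eq using sum_bounded_below[of "{..<m}" "b^(m-1)", OF lower] by simp
  show "(a^m - b^m)/(a-b) \<le> real m * a^(m-1)"
    unfolding sum_eq using sum_bounded_above[of "{..<m}", OF upper] by simp
qed

lemma tendsto_indicator_atMost_lessThan:
  "(\<lambda>n. indicator {..s - 1 / Suc n} (z::real) :: real) \<longlonglongrightarrow> indicator {..<s} z"
proof (cases "z < s")
  case True
  then obtain N where N: "inverse (real (Suc N)) < s - z" using reals_Archimedean[of "s - z"] by auto
  have "eventually (\<lambda>n. indicator {..s - 1 / Suc n} z = (indicator {..<s} z :: real)) sequentially"
    unfolding eventually_sequentially
  proof (intro exI allI impI)
    fix n assume "N \<le> n"
    then have "1 / real (Suc n) \<le> 1 / real (Suc N)" by (intro divide_left_mono) auto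
    then have "z \<le> s - 1 / Suc n" using N by (simp add: inverse_eq_divide)
    then show "indicator {..s - 1 / Suc n} z = (indicator {..<s} z :: real)" using True by simp
  qed
  then show ?thesis by (rule tendsto_eventually)
next
  case False
  have "indicator {..s - 1 / Suc n} z = (0::real)" for n
  proof -
    have "s - 1 / Suc n < s" by simp
    then have "\<not> z \<le> s - 1 / Suc n" using False by linarith
    then show ?thesis by (simp add: indicator_def)
  qed
  then show ?thesis using False by simp
qed

lemma tendsto_at_right_0_ratio_le:
  fixes f g :: "real \<Rightarrow> real"
  assumes "((\<lambda>r. f r / g r) \<longlongrightarrow> 0) (at_right 0)" and g_pos: "\<And>r. 0 < r \<Longrightarrow> 0 < g r"
    and "0 < \<epsilon>" "0 < R"
  obtains \<delta> where "0 < \<delta>" "\<delta> < R" "\<And>s. 0 < s \<Longrightarrow> s \<le> \<delta> \<Longrightarrow> f s \<le> \<epsilon> * g s"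
proof -
  obtain b where "0 < b" and b: "\<And>s. 0 < s \<Longrightarrow> s < b \<Longrightarrow> \<bar>f s / g s\<bar> < \<epsilon>"
    using tendstoD[OF assms(1) \<open>0 < \<epsilon>\<close>] by (auto simp: eventually_at_right_field dist_real_def)
  define \<delta> where "\<delta> = min (b / 2) (R / 2)"
  have "f s \<le> \<epsilon> * g s" if "0 < s" "s \<le> \<delta>" for s
  proof -
    have "s < b" using that \<open>0 < b\<close> by (simp add: \<delta>_def)
    then have "f s / g s < \<epsilon>" using b[OF \<open>0 < s\<close>] abs_ge_self[of "f s / g s"] by linarith
    then show ?thesis using g_pos[OF \<open>0 < s\<close>] by (simp add: pos_divide_less_eq less_imp_le mult.commute)
  qed
  moreover have "0 < \<delta>" "\<delta> < R" using \<open>0 < b\<close> \<open>0 < R\<close> by (auto simp: \<delta>_def)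
  ultimately show ?thesis using that by blast
qed

context finite_measure
begin

lemma integrable_real_bounded:
  fixes f :: "'a \<Rightarrow> real"
  assumes "f \<in> borel_measurable M" "\<And>\<omega>. \<omega> \<in> space M \<Longrightarrow> \<bar>f \<omega>\<bar> \<le> C"
  shows "integrable M f"
  using assms by (intro integrable_const_bound[where B=C]) auto

lemma nn_integral_eq_integral_bounded:
  fixes f :: "'a \<Rightarrow> real"
  assumes "f \<in> borel_measurable M" "\<And>\<omega>. 0 \<le> f \<omega>" "\<And>\<omega>. f \<omega> \<le> c"
  shows "(\<integral>\<^sup>+\<omega>. ennreal (f \<omega>) \<partial>M) = ennreal (\<integral>\<omega>. f \<omega> \<partial>M)"
  using assms order_trans[OF assms(2,3)]
  by (intro nn_integral_eq_integral integrable_real_bounded[where C=c]) auto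

lemma integral_indicator_comp:
  "(\<integral>\<omega>. (indicator T (Z \<omega>) :: real) \<partial>M) = measure M {\<omega>\<in>space M. Z \<omega> \<in> T}"
proof -
  have "(\<integral>\<omega>. (indicator T (Z \<omega>) :: real) \<partial>M) = (\<integral>\<omega>. indicator {\<omega>\<in>space M. Z \<omega> \<in> T} \<omega> \<partial>M)"
    by (intro Bochner_Integration.integral_cong) (auto split: split_indicator)
  then show ?thesis by (simp add: Int_absorb2)
qed

lemma integral_of_bool: "(\<integral>\<omega>. (of_bool (P \<omega>) :: real) \<partial>M) = measure M {\<omega>\<in>space M. P \<omega>}"
proof -
  have "(\<integral>\<omega>. (of_bool (P \<omega>) :: real) \<partial>M) = (\<integral>\<omega>. indicator {\<omega>\<in>space M. P \<omega>} \<omega> \<partial>M)"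
    by (intro Bochner_Integration.integral_cong) (auto split: split_indicator)
  then show ?thesis by (simp add: Int_absorb2)
qed

text \<open>The image of the measure with density \<open>f\<close> under \<open>Z\<close> is atomic on the countable set \<open>A\<close>.\<close>

lemma integral_indicator_countable:
  fixes f Z :: "'a \<Rightarrow> real"
  assumes [measurable]: "f \<in> borel_measurable M" "Z \<in> borel_measurable M"
    and f_nonneg: "\<And>\<omega>. 0 \<le> f \<omega>" and f_le: "\<And>\<omega>. f \<omega> \<le> c" and A: "countable A"
  shows "ennreal (\<integral>\<omega>. f \<omega> * indicator A (Z \<omega>) \<partial>M)
     = (\<integral>\<^sup>+r. ennreal (\<integral>\<omega>. f \<omega> * indicator {r} (Z \<omega>) \<partial>M) \<partial>count_space A)"
proof -
  have "0 \<le> c" using f_nonneg f_le by (meson order_trans)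
  let ?N = "distr (density M (\<lambda>\<omega>. ennreal (f \<omega>))) borel Z"
  have emeasure_N: "emeasure ?N S = ennreal (\<integral>\<omega>. f \<omega> * indicator S (Z \<omega>) \<partial>M)"
    if [measurable]: "S \<in> sets borel" for S
  proof -
    have "emeasure ?N S = emeasure (density M (\<lambda>\<omega>. ennreal (f \<omega>))) (Z -` S \<inter> space M)"
      by (subst emeasure_distr) auto
    also have "\<dots> = (\<integral>\<^sup>+\<omega>. ennreal (f \<omega>) * indicator (Z -` S \<inter> space M) \<omega> \<partial>M)"
      by (rule emeasure_density) auto
    also have "\<dots> = (\<integral>\<^sup>+\<omega>. ennreal (f \<omega> * indicator S (Z \<omega>)) \<partial>M)"
      by (intro nn_integral_cong) (auto split: split_indicator)
    also have "\<dots> = ennreal (\<integral>\<omega>. f \<omega> * indicator S (Z \<omega>) \<partial>M)"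
      by (rule nn_integral_eq_integral_bounded[where c=c])
        (use f_nonneg f_le \<open>0 \<le> c\<close> in \<open>auto split: split_indicator\<close>)
    finally show ?thesis .
  qed
  have "A \<in> sets borel" by (rule sets.countable[OF _ A]) auto
  then have "ennreal (\<integral>\<omega>. f \<omega> * indicator A (Z \<omega>) \<partial>M) = emeasure ?N A"
    by (simp add: emeasure_N)
  also have "\<dots> = (\<integral>\<^sup>+r. emeasure ?N {r} \<partial>count_space A)"
    by (rule emeasure_countable_singleton[OF _ A]) auto
  also have "\<dots> = (\<integral>\<^sup>+r. ennreal (\<integral>\<omega>. f \<omega> * indicator {r} (Z \<omega>) \<partial>M) \<partial>count_space A)"
    by (intro nn_integral_cong emeasure_N) auto
  finally show ?thesis .
qed

lemma integral_indicator_countable_mono: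
  fixes f g Z W :: "'a \<Rightarrow> real"
  assumes [measurable]: "f \<in> borel_measurable M" "g \<in> borel_measurable M"
      "Z \<in> borel_measurable M" "W \<in> borel_measurable M"
    and f_nonneg: "\<And>\<omega>. 0 \<le> f \<omega>" and f_le: "\<And>\<omega>. f \<omega> \<le> cf"
    and g_nonneg: "\<And>\<omega>. 0 \<le> g \<omega>" and g_le: "\<And>\<omega>. g \<omega> \<le> cg"
    and A: "countable A"
    and le: "\<And>r. r \<in> A \<Longrightarrow> (\<integral>\<omega>. f \<omega> * indicator {r} (Z \<omega>) \<partial>M) \<le> (\<integral>\<omega>. g \<omega> * indicator {r} (W \<omega>) \<partial>M)"
  shows "(\<integral>\<omega>. f \<omega> * indicator A (Z \<omega>) \<partial>M) \<le> (\<integral>\<omega>. g \<omega> * indicator A (W \<omega>) \<partial>M)"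
proof -
  have "ennreal (\<integral>\<omega>. f \<omega> * indicator A (Z \<omega>) \<partial>M)
      = (\<integral>\<^sup>+r. ennreal (\<integral>\<omega>. f \<omega> * indicator {r} (Z \<omega>) \<partial>M) \<partial>count_space A)"
    by (rule integral_indicator_countable[OF _ _ f_nonneg f_le A]) auto
  also have "\<dots> \<le> (\<integral>\<^sup>+r. ennreal (\<integral>\<omega>. g \<omega> * indicator {r} (W \<omega>) \<partial>M) \<partial>count_space A)"
    by (intro nn_integral_mono ennreal_leI le) simp
  also have "\<dots> = ennreal (\<integral>\<omega>. g \<omega> * indicator A (W \<omega>) \<partial>M)"
    by (rule integral_indicator_countable[OF _ _ g_nonneg g_le A, symmetric]) auto
  finally show ?thesis
    using g_nonneg by (subst (asm) ennreal_le_iff) (auto intro!: integral_nonneg_AE split: split_indicator)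
qed

lemma integral_indicator_atMost_lessThan:
  fixes w Z :: "'a \<Rightarrow> real"
  assumes [measurable]: "w \<in> borel_measurable M" "Z \<in> borel_measurable M"
    and w_bound: "\<And>\<omega>. \<bar>w \<omega>\<bar> \<le> c"
  shows "(\<lambda>n. \<integral>\<omega>. w \<omega> * indicator {..s - 1 / Suc n} (Z \<omega>) \<partial>M)
           \<longlonglongrightarrow> (\<integral>\<omega>. w \<omega> * indicator {..<s} (Z \<omega>) \<partial>M)"
proof (rule integral_dominated_convergence[where w="\<lambda>_. c"])
  show "AE \<omega> in M. (\<lambda>n. w \<omega> * indicator {..s - 1 / Suc n} (Z \<omega>)) \<longlonglongrightarrow> w \<omega> * indicator {..<s} (Z \<omega>)"
    by (intro AE_I2 tendsto_mult_left tendsto_indicator_atMost_lessThan)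
  show "AE \<omega> in M. norm (w \<omega> * indicator {..s - 1 / Suc n} (Z \<omega>)) \<le> c" for n
    using w_bound order_trans[OF abs_ge_zero w_bound]
    by (intro AE_I2) (auto split: split_indicator simp: abs_mult)
qed auto

text \<open>A downward closed set bounded above by \<open>\<delta>\<close> is \<open>{..s}\<close> or \<open>{..<s}\<close>; the open case is
  reached as a limit of closed ones.\<close>

lemma integral_indicator_downset_le:
  fixes w Z :: "'a \<Rightarrow> real"
  assumes [measurable]: "w \<in> borel_measurable M" "Z \<in> borel_measurable M"
    and w_bound: "\<And>\<omega>. \<bar>w \<omega>\<bar> \<le> c"
    and down: "\<And>r r'. r \<in> S \<Longrightarrow> r' \<le> r \<Longrightarrow> r' \<in> S" and S_le: "S \<subseteq> {..\<delta>}"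
    and atMost_le: "\<And>s. s \<le> \<delta> \<Longrightarrow>
      (\<integral>\<omega>. w \<omega> * indicator {..s} (Z \<omega>) \<partial>M) \<le> \<epsilon> * measure M {\<omega>\<in>space M. Z \<omega> \<le> s}"
  shows "(\<integral>\<omega>. w \<omega> * indicator S (Z \<omega>) \<partial>M) \<le> \<epsilon> * (\<integral>\<omega>. indicator S (Z \<omega>) \<partial>M)"
proof (cases "S = {}")
  case nonempty: False
  have bdd: "bdd_above S" using S_le by (auto simp: bdd_above_def)
  define s where "s = Sup S"
  have upper: "r \<le> s" if "r \<in> S" for r unfolding s_def using that bdd by (rule cSup_upper)
  have atMost: "(\<integral>\<omega>. w \<omega> * indicator {..t} (Z \<omega>) \<partial>M) \<le> \<epsilon> * (\<integral>\<omega>. indicator {..t} (Z \<omega>) \<partial>M)"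
    if "t \<in> S" for t
    using atMost_le[of t] that S_le integral_indicator_comp[of "{..t}" Z] by auto
  show ?thesis
  proof (cases "s \<in> S")
    case True
    then have "S = {..s}" using upper down by auto
    with True show ?thesis using atMost by simp
  next
    case False
    have S: "S = {..<s}"
    proof safe
      fix r assume "r \<in> S" then show "r < s" using upper False by (metis le_less)
    next
      fix r assume "r < s"
      then obtain r' where "r' \<in> S" "r < r'" using less_cSup_iff[OF nonempty bdd] unfolding s_def by auto
      then show "r \<in> S" using down by auto
    qed
    have "(\<integral>\<omega>. w \<omega> * indicator {..<s} (Z \<omega>) \<partial>M) \<le> \<epsilon> * (\<integral>\<omega>. 1 * indicator {..<s} (Z \<omega>) \<partial>M)"
    proof (rule LIMSEQ_le)
      show "(\<lambda>n. \<integral>\<omega>. w \<omega> * indicator {..s - 1 / Suc n} (Z \<omega>) \<partial>M)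
              \<longlonglongrightarrow> (\<integral>\<omega>. w \<omega> * indicator {..<s} (Z \<omega>) \<partial>M)"
        by (rule integral_indicator_atMost_lessThan) (use w_bound in auto)
      show "(\<lambda>n. \<epsilon> * (\<integral>\<omega>. 1 * indicator {..s - 1 / Suc n} (Z \<omega>) \<partial>M))
              \<longlonglongrightarrow> \<epsilon> * (\<integral>\<omega>. 1 * indicator {..<s} (Z \<omega>) \<partial>M)"
        by (intro tendsto_mult_left integral_indicator_atMost_lessThan[where c=1]) auto
      show "\<exists>N. \<forall>n\<ge>N. (\<integral>\<omega>. w \<omega> * indicator {..s - 1 / Suc n} (Z \<omega>) \<partial>M)
              \<le> \<epsilon> * (\<integral>\<omega>. 1 * indicator {..s - 1 / Suc n} (Z \<omega>) \<partial>M)"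
        using atMost unfolding S by simp
    qed
    then show ?thesis unfolding S by simp
  qed
qed simp

lemma integral_layer_cake:
  fixes v Z :: "'a \<Rightarrow> real" and k :: "real \<Rightarrow> real"
  assumes [measurable]: "v \<in> borel_measurable M" "Z \<in> borel_measurable M" "k \<in> borel_measurable borel"
    and v_nonneg: "\<And>\<omega>. 0 \<le> v \<omega>" and v_le: "\<And>\<omega>. v \<omega> \<le> cv"
    and k_nonneg: "\<And>r. 0 \<le> k r" and k_le: "\<And>r. k r \<le> ck"
  shows "ennreal (\<integral>\<omega>. v \<omega> * k (Z \<omega>) * indicator {..\<delta>} (Z \<omega>) \<partial>M)
    = (\<integral>\<^sup>+t. ennreal (\<integral>\<omega>. v \<omega> * indicator {r. r \<le> \<delta> \<and> t < k r} (Z \<omega>) \<partial>M) * indicator {0..} t \<partial>lborel)"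
proof -
  interpret pair_sigma_finite M lborel ..
  have "0 \<le> cv" using v_nonneg v_le by (meson order_trans)
  have "0 \<le> ck" using k_nonneg k_le by (meson order_trans)
  define f where "f \<omega> t = ennreal (v \<omega> * (if Z \<omega> \<le> \<delta> \<and> t < k (Z \<omega>) then 1 else 0) * (if 0 \<le> t then 1 else 0))"
    for \<omega> t
  have f_measurable: "case_prod f \<in> borel_measurable (M \<Otimes>\<^sub>M lborel)"
    unfolding f_def by measurable
  have integral_t: "(\<integral>\<^sup>+t. f \<omega> t \<partial>lborel) = ennreal (v \<omega> * k (Z \<omega>) * indicator {..\<delta>} (Z \<omega>))" for \<omega>
  proof -
    have "(\<lambda>t. f \<omega> t) = (\<lambda>t. ennreal (v \<omega> * indicator {..\<delta>} (Z \<omega>)) * indicator {0..<k (Z \<omega>)} t)"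
      by (auto simp: f_def fun_eq_iff split: split_indicator)
    then have "(\<integral>\<^sup>+t. f \<omega> t \<partial>lborel)
        = ennreal (v \<omega> * indicator {..\<delta>} (Z \<omega>)) * emeasure lborel {0..<k (Z \<omega>)}"
      by (simp add: nn_integral_cmult_indicator)
    also have "\<dots> = ennreal (v \<omega> * k (Z \<omega>) * indicator {..\<delta>} (Z \<omega>))"
      using k_nonneg[of "Z \<omega>"] v_nonneg[of \<omega>]
      by (simp add: ennreal_mult[symmetric] mult_ac split: split_indicator)
    finally show ?thesis .
  qed
  have integral_\<omega>: "(\<integral>\<^sup>+\<omega>. f \<omega> t \<partial>M)
      = ennreal (\<integral>\<omega>. v \<omega> * indicator {r. r \<le> \<delta> \<and> t < k r} (Z \<omega>) \<partial>M) * indicator {0..} t" for t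
  proof (cases "0 \<le> t")
    case True
    have "(\<integral>\<^sup>+\<omega>. f \<omega> t \<partial>M) = (\<integral>\<^sup>+\<omega>. ennreal (v \<omega> * indicator {r. r \<le> \<delta> \<and> t < k r} (Z \<omega>)) \<partial>M)"
      using True by (intro nn_integral_cong) (auto simp: f_def split: split_indicator)
    also have "\<dots> = ennreal (\<integral>\<omega>. v \<omega> * indicator {r. r \<le> \<delta> \<and> t < k r} (Z \<omega>) \<partial>M)"
    proof (rule nn_integral_eq_integral_bounded[where c=cv])
      have [measurable]: "{r. r \<le> \<delta> \<and> t < k r} \<in> sets borel" by measurable
      show "(\<lambda>\<omega>. v \<omega> * indicator {r. r \<le> \<delta> \<and> t < k r} (Z \<omega>)) \<in> borel_measurable M" by measurable
    qed (use v_nonneg v_le \<open>0 \<le> cv\<close> in \<open>auto split: split_indicator\<close>)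
    finally show ?thesis using True by simp
  qed (simp add: f_def)
  have "ennreal (\<integral>\<omega>. v \<omega> * k (Z \<omega>) * indicator {..\<delta>} (Z \<omega>) \<partial>M)
      = (\<integral>\<^sup>+\<omega>. ennreal (v \<omega> * k (Z \<omega>) * indicator {..\<delta>} (Z \<omega>)) \<partial>M)"
  proof (rule nn_integral_eq_integral_bounded[where c="cv * ck", symmetric])
    fix \<omega>
    have "v \<omega> * k (Z \<omega>) \<le> cv * ck" using v_nonneg v_le k_nonneg k_le \<open>0 \<le> cv\<close> by (intro mult_mono) auto
    then show "v \<omega> * k (Z \<omega>) * indicator {..\<delta>} (Z \<omega>) \<le> cv * ck"
      using v_nonneg[of \<omega>] k_nonneg[of "Z \<omega>"] \<open>0 \<le> cv\<close> \<open>0 \<le> ck\<close> by (auto split: split_indicator)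
  qed (use v_nonneg k_nonneg in \<open>auto split: split_indicator\<close>)
  also have "\<dots> = (\<integral>\<^sup>+\<omega>. (\<integral>\<^sup>+t. f \<omega> t \<partial>lborel) \<partial>M)" by (simp add: integral_t)
  also have "\<dots> = (\<integral>\<^sup>+t. (\<integral>\<^sup>+\<omega>. f \<omega> t \<partial>M) \<partial>lborel)" by (rule Fubini'[OF f_measurable, symmetric])
  also have "\<dots> = (\<integral>\<^sup>+t. ennreal (\<integral>\<omega>. v \<omega> * indicator {r. r \<le> \<delta> \<and> t < k r} (Z \<omega>) \<partial>M)
                     * indicator {0..} t \<partial>lborel)"
    by (simp add: integral_\<omega>)
  finally show ?thesis .
qed

text \<open>Layer cake: the superlevel sets of an antitone weight \<open>k\<close> are downward closed, so the
  comparison on the sets \<open>{..s}\<close> passes to the \<open>k\<close>-weighted integrals.\<close>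

lemma integral_antimono_weight_le:
  fixes w Z :: "'a \<Rightarrow> real" and k :: "real \<Rightarrow> real"
  assumes [measurable]: "w \<in> borel_measurable M" "Z \<in> borel_measurable M" "k \<in> borel_measurable borel"
    and w_nonneg: "\<And>\<omega>. 0 \<le> w \<omega>" and w_le: "\<And>\<omega>. w \<omega> \<le> cw"
    and k_nonneg: "\<And>r. 0 \<le> k r" and k_le: "\<And>r. k r \<le> ck"
    and k_antimono: "\<And>s t. s \<le> t \<Longrightarrow> k t \<le> k s" and "0 \<le> \<epsilon>"
    and atMost_le: "\<And>s. s \<le> \<delta> \<Longrightarrow>
      (\<integral>\<omega>. w \<omega> * indicator {..s} (Z \<omega>) \<partial>M) \<le> \<epsilon> * measure M {\<omega>\<in>space M. Z \<omega> \<le> s}"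
  shows "(\<integral>\<omega>. w \<omega> * k (Z \<omega>) * indicator {..\<delta>} (Z \<omega>) \<partial>M)
    \<le> \<epsilon> * (\<integral>\<omega>. k (Z \<omega>) * indicator {..\<delta>} (Z \<omega>) \<partial>M)"
proof -
  define S where "S t = {r. r \<le> \<delta> \<and> t < k r}" for t
  define level where "level t = (\<integral>\<omega>. (1::real) * indicator (S t) (Z \<omega>) \<partial>M)" for t
  have level_measurable: "(\<lambda>t. ennreal (level t) * indicator {0..} t) \<in> borel_measurable lborel"
  proof -
    have "level = (\<lambda>t. \<integral>\<omega>. (if Z \<omega> \<le> \<delta> \<and> t < k (Z \<omega>) then 1 else 0) \<partial>M)"
      unfolding level_def S_def
      by (intro ext Bochner_Integration.integral_cong refl) (auto split: split_indicator)
    moreover have "(\<lambda>t. \<integral>\<omega>. (if Z \<omega> \<le> \<delta> \<and> t < k (Z \<omega>) then 1 else 0::real) \<partial>M) \<in> borel_measurable borel"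
      by measurable
    ultimately have [measurable]: "level \<in> borel_measurable borel" by simp
    show ?thesis by measurable
  qed
  have level_le: "ennreal (\<integral>\<omega>. w \<omega> * indicator (S t) (Z \<omega>) \<partial>M) * indicator {0..} t
      \<le> ennreal \<epsilon> * (ennreal (level t) * indicator {0..} t)" for t
  proof -
    have "(\<integral>\<omega>. w \<omega> * indicator (S t) (Z \<omega>) \<partial>M) \<le> \<epsilon> * (\<integral>\<omega>. indicator (S t) (Z \<omega>) \<partial>M)"
      by (rule integral_indicator_downset_le[OF _ _ _ _ _ atMost_le, where c=cw])
        (use w_nonneg w_le k_antimono in \<open>auto simp: S_def intro: order_trans less_le_trans\<close>)
    then have "(\<integral>\<omega>. w \<omega> * indicator (S t) (Z \<omega>) \<partial>M) \<le> \<epsilon> * level t"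
      by (simp add: level_def)
    moreover have "0 \<le> level t"
      unfolding level_def by (intro integral_nonneg_AE) (auto split: split_indicator)
    ultimately show ?thesis
      using \<open>0 \<le> \<epsilon>\<close> by (auto simp: ennreal_mult[symmetric] intro!: ennreal_leI split: split_indicator)
  qed
  have "ennreal (\<integral>\<omega>. w \<omega> * k (Z \<omega>) * indicator {..\<delta>} (Z \<omega>) \<partial>M)
      = (\<integral>\<^sup>+t. ennreal (\<integral>\<omega>. w \<omega> * indicator (S t) (Z \<omega>) \<partial>M) * indicator {0..} t \<partial>lborel)"
    unfolding S_def by (rule integral_layer_cake) (use w_nonneg w_le k_nonneg k_le in auto)
  also have "\<dots> \<le> (\<integral>\<^sup>+t. ennreal \<epsilon> * (ennreal (level t) * indicator {0..} t) \<partial>lborel)"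
    by (intro nn_integral_mono level_le)
  also have "\<dots> = ennreal \<epsilon> * (\<integral>\<^sup>+t. ennreal (level t) * indicator {0..} t \<partial>lborel)"
    by (rule nn_integral_cmult[OF level_measurable])
  also have "(\<integral>\<^sup>+t. ennreal (level t) * indicator {0..} t \<partial>lborel)
      = ennreal (\<integral>\<omega>. 1 * k (Z \<omega>) * indicator {..\<delta>} (Z \<omega>) \<partial>M)"
    unfolding level_def S_def by (rule integral_layer_cake[where cv=1, symmetric]) (use k_nonneg k_le in auto)
  finally have "ennreal (\<integral>\<omega>. w \<omega> * k (Z \<omega>) * indicator {..\<delta>} (Z \<omega>) \<partial>M)
      \<le> ennreal \<epsilon> * ennreal (\<integral>\<omega>. 1 * k (Z \<omega>) * indicator {..\<delta>} (Z \<omega>) \<partial>M)" .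
  moreover have "0 \<le> (\<integral>\<omega>. 1 * k (Z \<omega>) * indicator {..\<delta>} (Z \<omega>) \<partial>M)"
    by (intro integral_nonneg_AE) (use k_nonneg in \<open>auto split: split_indicator\<close>)
  ultimately show ?thesis
    using \<open>0 \<le> \<epsilon>\<close> by (simp add: ennreal_mult[symmetric] ennreal_le_iff)
qed

end

lemma (in prob_space) integral_indep_var:
  fixes f :: "'b \<times> 'b \<Rightarrow> real"
  assumes indep: "indep_var MX X MW W"
    and [measurable]: "f \<in> borel_measurable (MX \<Otimes>\<^sub>M MW)" and f_bound: "\<And>p. \<bar>f p\<bar> \<le> c"
  shows "(\<integral>\<omega>. f (X \<omega>, W \<omega>) \<partial>M) = (\<integral>\<omega>. (\<integral>\<omega>'. f (X \<omega>, W \<omega>') \<partial>M) \<partial>M)"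
proof -
  have [measurable]: "X \<in> measurable M MX" "W \<in> measurable M MW"
    using indep_var_rv1[OF indep] indep_var_rv2[OF indep] by auto
  interpret PX: prob_space "distr M MX X" by (rule prob_space_distr) simp
  interpret PW: prob_space "distr M MW W" by (rule prob_space_distr) simp
  interpret P: pair_prob_space "distr M MX X" "distr M MW W" ..
  have "(\<integral>\<omega>. f (X \<omega>, W \<omega>) \<partial>M) = integral\<^sup>L (distr M (MX \<Otimes>\<^sub>M MW) (\<lambda>\<omega>. (X \<omega>, W \<omega>))) f"
    by (rule integral_distr[symmetric]) auto
  also have "distr M (MX \<Otimes>\<^sub>M MW) (\<lambda>\<omega>. (X \<omega>, W \<omega>)) = distr M MX X \<Otimes>\<^sub>M distr M MW W"
    using indep_var_distribution_eq[THEN iffD1, OF indep] by simp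
  also have "integral\<^sup>L (distr M MX X \<Otimes>\<^sub>M distr M MW W) f
      = (\<integral>a. (\<integral>b. f (a, b) \<partial>distr M MW W) \<partial>distr M MX X)"
    by (rule P.integral_fst'[symmetric], rule P.integrable_const_bound[where B=c]) (use f_bound in auto)
  also have "\<dots> = (\<integral>a. (\<integral>\<omega>'. f (a, W \<omega>') \<partial>M) \<partial>distr M MX X)"
    by (intro Bochner_Integration.integral_cong refl integral_distr) auto
  also have "\<dots> = (\<integral>\<omega>. (\<integral>\<omega>'. f (X \<omega>, W \<omega>') \<partial>M) \<partial>M)"
    by (rule integral_distr) auto
  finally show ?thesis .
qed

section \<open>Nearest neighbours\<close>

locale nearest_neighbor = prob_space M for M :: "'m measure" +
  fixes Y :: "nat \<Rightarrow> 'm \<Rightarrow> 'a::metric_space" and NN :: "nat \<Rightarrow> 'm \<Rightarrow> 'a"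
    and \<eta> :: "'a \<Rightarrow> real" and x :: 'a and B :: real
  assumes measurable_Y[measurable]: "\<And>i. Y i \<in> measurable M borel"
    and indep: "indep_vars (\<lambda>_. borel) Y UNIV"
    and ident: "\<And>i. distr M borel (Y i) = distr M borel (Y 0)"
    and measurable_eta[measurable]: "\<eta> \<in> borel_measurable borel"
    and eta_bounded: "\<And>y. \<bar>\<eta> y\<bar> \<le> B"
    and measurable_NN: "\<And>m. m \<ge> 1 \<Longrightarrow> NN m \<in> measurable M borel"
    and NN_in: "\<And>m \<omega>. m \<ge> 1 \<Longrightarrow> \<omega> \<in> space M \<Longrightarrow> \<exists>i\<in>{1..m}. NN m \<omega> = Y i \<omega>"
    and NN_min: "\<And>m \<omega> i. m \<ge> 1 \<Longrightarrow> \<omega> \<in> space M \<Longrightarrow> i \<in> {1..m} \<Longrightarrow>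
                   dist x (NN m \<omega>) \<le> dist x (Y i \<omega>)"
begin

definition "dY i \<omega> = dist x (Y i \<omega>)"
definition "dNN m \<omega> = dist x (NN m \<omega>)"
definition "err y = \<bar>\<eta> y - \<eta> x\<bar>"
definition "ball_prob r = prob {\<omega>\<in>space M. dY 0 \<omega> \<le> r}"
definition "sphere_prob r = prob {\<omega>\<in>space M. dY 0 \<omega> = r}"
definition "tail_prob r = prob {\<omega>\<in>space M. r \<le> dY 0 \<omega>}"
definition "atoms = {r. 0 < sphere_prob r}"

text \<open>A density of the law of \<open>dNN m\<close> with respect to the law of \<open>dY 0\<close>: off the atoms it is the
  derivative of \<open>P(dNN m \<ge> r) = tail_prob r ^ m\<close>.\<close>

definition "nn_density m r =
  (if sphere_prob r > 0 then prob {\<omega>\<in>space M. dNN m \<omega> = r} / sphere_prob r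
   else real m * tail_prob r ^ (m - 1))"

lemma borel_measurable_dist_x[measurable]: "(\<lambda>y. dist x y) \<in> borel_measurable borel"
  by (intro borel_measurable_continuous_onI continuous_intros)

lemma measurable_dY[measurable]: "dY i \<in> borel_measurable M"
  unfolding dY_def using measurable_compose[OF measurable_Y borel_measurable_dist_x] by simp

lemma measurable_dNN: "m \<ge> 1 \<Longrightarrow> dNN m \<in> borel_measurable M"
  unfolding dNN_def using measurable_compose[OF measurable_NN borel_measurable_dist_x] by simp

lemma measurable_err[measurable]: "err \<in> borel_measurable borel"
  unfolding err_def by measurable

lemma dNN_nonneg: "0 \<le> dNN m \<omega>" unfolding dNN_def by simp
lemma err_nonneg: "0 \<le> err y" unfolding err_def by simp
lemma err_le: "err y \<le> 2 * B"
  unfolding err_def using eta_bounded[of y] eta_bounded[of x] by linarith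
lemma err_x: "err x = 0" unfolding err_def by simp
lemma B_nonneg: "0 \<le> B" using eta_bounded[of x] by linarith

lemma integrable_err_NN_indicator:
  assumes "m \<ge> 1" and [measurable]: "S \<in> sets borel"
  shows "integrable M (\<lambda>\<omega>. err (NN m \<omega>) * indicator S (dNN m \<omega>))"
  using measurable_NN[OF assms(1)] measurable_dNN[OF assms(1)]
  by (intro integrable_real_bounded[where C="2*B"])
     (use err_le err_nonneg B_nonneg in \<open>auto split: split_indicator\<close>)

lemma dNN_le: "m \<ge> 1 \<Longrightarrow> \<omega> \<in> space M \<Longrightarrow> i \<in> {1..m} \<Longrightarrow> dNN m \<omega> \<le> dY i \<omega>"
  unfolding dNN_def dY_def using NN_min by blast

lemma dNN_attained:
  assumes "m \<ge> 1" "\<omega> \<in> space M"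
  obtains i where "i \<in> {1..m}" "NN m \<omega> = Y i \<omega>" "dNN m \<omega> = dY i \<omega>"
  using NN_in[OF assms] unfolding dNN_def dY_def by auto

lemma dNN_ge_iff:
  assumes "m \<ge> 1" "\<omega> \<in> space M"
  shows "r \<le> dNN m \<omega> \<longleftrightarrow> (\<forall>j\<in>{1..m}. r \<le> dY j \<omega>)"
    and "r < dNN m \<omega> \<longleftrightarrow> (\<forall>j\<in>{1..m}. r < dY j \<omega>)"
proof -
  obtain i where "i \<in> {1..m}" "dNN m \<omega> = dY i \<omega>" using dNN_attained[OF assms] by blast
  then show "r \<le> dNN m \<omega> \<longleftrightarrow> (\<forall>j\<in>{1..m}. r \<le> dY j \<omega>)"
    and "r < dNN m \<omega> \<longleftrightarrow> (\<forall>j\<in>{1..m}. r < dY j \<omega>)"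
    using dNN_le[OF assms] by (metis order_trans, metis less_le_trans)
qed

lemma prob_dY_greater: "prob {\<omega>\<in>space M. r < dY 0 \<omega>} = 1 - ball_prob r"
proof -
  have "{\<omega>\<in>space M. r < dY 0 \<omega>} = space M - {\<omega>\<in>space M. dY 0 \<omega> \<le> r}" by auto
  then show ?thesis unfolding ball_prob_def by (simp add: prob_compl)
qed

lemma tail_prob_eq: "tail_prob r = sphere_prob r + (1 - ball_prob r)"
proof -
  have "{\<omega>\<in>space M. r \<le> dY 0 \<omega>} = {\<omega>\<in>space M. dY 0 \<omega> = r} \<union> {\<omega>\<in>space M. r < dY 0 \<omega>}"
    by auto
  moreover have "prob ({\<omega>\<in>space M. dY 0 \<omega> = r} \<union> {\<omega>\<in>space M. r < dY 0 \<omega>})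
       = prob {\<omega>\<in>space M. dY 0 \<omega> = r} + prob {\<omega>\<in>space M. r < dY 0 \<omega>}"
    by (rule finite_measure_Union) auto
  ultimately show ?thesis
    unfolding tail_prob_def sphere_prob_def prob_dY_greater by simp
qed

lemma ball_prob_le_1: "ball_prob r \<le> 1" unfolding ball_prob_def by simp
lemma sphere_prob_nonneg: "0 \<le> sphere_prob r" unfolding sphere_prob_def by simp
lemma tail_prob_nonneg: "0 \<le> tail_prob r" unfolding tail_prob_def by simp
lemma tail_prob_le_1: "tail_prob r \<le> 1" unfolding tail_prob_def by simp

lemma tail_prob_le_ball_prob_compl: "s < t \<Longrightarrow> tail_prob t \<le> 1 - ball_prob s"
  unfolding tail_prob_def prob_dY_greater[symmetric] by (intro finite_measure_mono) auto

lemma integral_Y_eq_Y0: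
  fixes f :: "'a \<Rightarrow> real"
  assumes [measurable]: "f \<in> borel_measurable borel"
  shows "(\<integral>\<omega>. f (Y i \<omega>) \<partial>M) = (\<integral>\<omega>. f (Y 0 \<omega>) \<partial>M)"
proof -
  have "(\<integral>\<omega>. f (Y i \<omega>) \<partial>M) = integral\<^sup>L (distr M borel (Y i)) f"
    by (rule integral_distr[symmetric]) auto
  also have "\<dots> = (\<integral>\<omega>. f (Y 0 \<omega>) \<partial>M)"
    by (subst ident[of i], rule integral_distr) auto
  finally show ?thesis .
qed

lemma prob_all_dY_in:
  assumes J: "finite J" and [measurable]: "S \<in> sets borel"
  shows "prob {\<omega>\<in>space M. \<forall>j\<in>J. dY j \<omega> \<in> S} = prob {\<omega>\<in>space M. dY 0 \<omega> \<in> S} ^ card J"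
proof -
  have indep_indicators: "indep_vars (\<lambda>_. borel) (\<lambda>j \<omega>. indicator S (dY j \<omega>) :: real) J"
    unfolding dY_def
    by (rule indep_vars_compose2[OF indep_vars_subset[OF indep], where N="\<lambda>_. borel"
          and Y="\<lambda>j y. indicator S (dist x y) :: real"]) auto
  have "integrable M (\<lambda>\<omega>. indicator S (dY j \<omega>) :: real)" for j
    by (rule integrable_real_bounded[where C=1]) (auto split: split_indicator)
  note integral_prod = indep_vars_lebesgue_integral[OF J indep_indicators this]
  have "(\<Prod>j\<in>J. indicator S (dY j \<omega>) :: real) = indicator {\<omega>. \<forall>j\<in>J. dY j \<omega> \<in> S} \<omega>" for \<omega>
    using J by (induction J rule: finite_induct) (auto split: split_indicator)
  then have "prob {\<omega>\<in>space M. \<forall>j\<in>J. dY j \<omega> \<in> S} = (\<integral>\<omega>. (\<Prod>j\<in>J. indicator S (dY j \<omega>)) \<partial>M)"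
    by (simp add: Int_def conj_commute)
  also have "\<dots> = (\<Prod>j\<in>J. \<integral>\<omega>. indicator S (dist x (Y j \<omega>)) \<partial>M)"
    using integral_prod by (simp add: dY_def)
  also have "\<dots> = (\<Prod>j\<in>J. \<integral>\<omega>. indicator S (dist x (Y 0 \<omega>)) \<partial>M)"
    by (intro prod.cong refl integral_Y_eq_Y0) measurable
  also have "\<dots> = prob {\<omega>\<in>space M. dY 0 \<omega> \<in> S} ^ card J"
    using integral_indicator_comp[of S "dY 0"] by (simp add: dY_def)
  finally show ?thesis .
qed

lemma prob_all_dY_ge: "finite J \<Longrightarrow> prob {\<omega>\<in>space M. \<forall>j\<in>J. t \<le> dY j \<omega>} = tail_prob t ^ card J"
  using prob_all_dY_in[of J "{t..}"] unfolding tail_prob_def by simp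

lemma prob_all_dY_gt: "finite J \<Longrightarrow> prob {\<omega>\<in>space M. \<forall>j\<in>J. t < dY j \<omega>} = (1 - ball_prob t) ^ card J"
  using prob_all_dY_in[of J "{t<..}"] prob_dY_greater[of t] by simp

lemma prob_dNN_eq:
  assumes m: "m \<ge> 1"
  shows "prob {\<omega>\<in>space M. dNN m \<omega> = r} = tail_prob r ^ m - (1 - ball_prob r) ^ m"
proof -
  note measurable_dNN[OF m, measurable]
  have "{\<omega>\<in>space M. dNN m \<omega> = r} = {\<omega>\<in>space M. r \<le> dNN m \<omega>} - {\<omega>\<in>space M. r < dNN m \<omega>}"
    by auto
  then have "prob {\<omega>\<in>space M. dNN m \<omega> = r}
      = prob {\<omega>\<in>space M. r \<le> dNN m \<omega>} - prob {\<omega>\<in>space M. r < dNN m \<omega>}"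
    by (simp add: finite_measure_Diff subset_eq)
  also have "\<dots> = prob {\<omega>\<in>space M. \<forall>j\<in>{1..m}. r \<le> dY j \<omega>} - prob {\<omega>\<in>space M. \<forall>j\<in>{1..m}. r < dY j \<omega>}"
    using dNN_ge_iff[OF m] by (intro arg_cong2[where f=minus] arg_cong[where f=prob]) auto
  also have "\<dots> = tail_prob r ^ m - (1 - ball_prob r) ^ m"
    by (simp add: prob_all_dY_ge prob_all_dY_gt)
  finally show ?thesis .
qed

lemma nn_density_bounds:
  assumes m: "m \<ge> 1"
  shows "real m * (1 - ball_prob r) ^ (m - 1) \<le> nn_density m r"
    and "nn_density m r \<le> real m * tail_prob r ^ (m - 1)"
proof -
  have tail: "tail_prob r - sphere_prob r = 1 - ball_prob r" using tail_prob_eq[of r] by simp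
  have "0 \<le> 1 - ball_prob r" using ball_prob_le_1[of r] by simp
  have atom: "nn_density m r = (tail_prob r ^ m - (1 - ball_prob r) ^ m) / (tail_prob r - (1 - ball_prob r))"
    if "sphere_prob r > 0"
    using that tail prob_dNN_eq[OF m] by (simp add: nn_density_def)
  have nonatom: "nn_density m r = real m * tail_prob r ^ (m - 1)" "1 - ball_prob r = tail_prob r"
    if "\<not> sphere_prob r > 0"
    using that sphere_prob_nonneg[of r] tail by (simp_all add: nn_density_def)
  show "real m * (1 - ball_prob r) ^ (m - 1) \<le> nn_density m r"
    using atom nonatom power_diff_div_bounds(1)[of "1 - ball_prob r" "tail_prob r" m] tail \<open>0 \<le> 1 - ball_prob r\<close>
    by (cases "sphere_prob r > 0") auto
  show "nn_density m r \<le> real m * tail_prob r ^ (m - 1)"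
    using atom nonatom power_diff_div_bounds(2)[of "1 - ball_prob r" "tail_prob r" m] tail \<open>0 \<le> 1 - ball_prob r\<close>
    by (cases "sphere_prob r > 0") auto
qed

lemma nn_density_nonneg: "m \<ge> 1 \<Longrightarrow> 0 \<le> nn_density m r"
  using nn_density_bounds(1)[of m r] ball_prob_le_1[of r] by (smt (verit) zero_le_mult_iff zero_le_power of_nat_0_le_iff)

lemma nn_density_le: "m \<ge> 1 \<Longrightarrow> nn_density m r \<le> real m"
  using nn_density_bounds(2)[of m r] power_le_one[OF tail_prob_nonneg tail_prob_le_1, of r "m - 1"]
  by (smt (verit) mult_left_le of_nat_0_le_iff)

lemma nn_density_antimono:
  assumes m: "m \<ge> 1" and "s \<le> t"
  shows "nn_density m t \<le> nn_density m s"
proof (cases "s = t")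
  case False
  with \<open>s \<le> t\<close> have "s < t" by simp
  have "nn_density m t \<le> real m * tail_prob t ^ (m - 1)" by (rule nn_density_bounds(2)[OF m])
  also have "\<dots> \<le> real m * (1 - ball_prob s) ^ (m - 1)"
    using tail_prob_le_ball_prob_compl[OF \<open>s < t\<close>] tail_prob_nonneg[of t]
    by (intro mult_left_mono power_mono) auto
  also have "\<dots> \<le> nn_density m s" by (rule nn_density_bounds(1)[OF m])
  finally show ?thesis .
qed simp

lemma measurable_nn_density[measurable]:
  assumes "m \<ge> 1"
  shows "nn_density m \<in> borel_measurable borel"
proof -
  have "mono (\<lambda>r. - nn_density m r)" by (auto simp: mono_def intro: nn_density_antimono[OF assms])
  then have "(\<lambda>r. - (- nn_density m r)) \<in> borel_measurable borel"
    by (intro borel_measurable_uminus borel_measurable_mono)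
  then show ?thesis by simp
qed

lemma countable_atoms: "countable atoms"
proof -
  interpret P: prob_space "distr M borel (dY 0)" by (rule prob_space_distr) simp
  have distr: "sphere_prob r = measure (distr M borel (dY 0)) {r}" for r
    unfolding sphere_prob_def by (subst measure_distr) (auto intro!: arg_cong[where f=prob])
  show ?thesis
    unfolding atoms_def distr using P.countable_support by (rule countable_subset[rotated]) auto
qed

lemma sets_atoms[measurable]: "atoms \<in> sets borel"
  by (rule sets.countable[OF _ countable_atoms]) auto

lemma nn_density_nonatomic: "r \<notin> atoms \<Longrightarrow> nn_density m r = real m * tail_prob r ^ (m - 1)"
  unfolding nn_density_def atoms_def by simp

lemma tail_prob_nonatomic: "r \<notin> atoms \<Longrightarrow> tail_prob r = 1 - ball_prob r"
  using tail_prob_eq[of r] sphere_prob_nonneg[of r] unfolding atoms_def by simp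

definition "min_dY J \<omega> = Min ((\<lambda>j. dY j \<omega>) ` J)"
definition "others m i = {1..m} - {i::nat}"

lemma measurable_min_dY[measurable]: "finite J \<Longrightarrow> min_dY J \<in> borel_measurable M"
  unfolding min_dY_def by measurable

lemma min_dY_iff:
  assumes "finite J" "J \<noteq> {}"
  shows "t \<le> min_dY J \<omega> \<longleftrightarrow> (\<forall>j\<in>J. t \<le> dY j \<omega>)" and "t < min_dY J \<omega> \<longleftrightarrow> (\<forall>j\<in>J. t < dY j \<omega>)"
  unfolding min_dY_def using assms by auto

lemma others_finite_nonempty_card:
  assumes "m \<ge> 2" "i \<in> {1..m}"
  shows "finite (others m i)" "others m i \<noteq> {}" "i \<notin> others m i" "card (others m i) = m - 1"
proof -
  show "finite (others m i)" "i \<notin> others m i" by (auto simp: others_def)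
  show "card (others m i) = m - 1" using assms by (simp add: others_def card_Diff_singleton)
  then show "others m i \<noteq> {}" using assms by auto
qed

text \<open>\<open>indep_var\<close> relates random variables of one common type, hence the embedding of both
  into \<open>'a \<times> real\<close>.\<close>

lemma indep_var_Y_min_dY:
  assumes "finite J" "i \<notin> J"
  shows "indep_var (borel \<Otimes>\<^sub>M borel) (\<lambda>\<omega>. (Y i \<omega>, 0::real)) (borel \<Otimes>\<^sub>M borel) (\<lambda>\<omega>. (x, min_dY J \<omega>))"
proof -
  have "indep_var
    (borel \<Otimes>\<^sub>M borel) ((\<lambda>f. (f i, 0::real)) \<circ> (\<lambda>\<omega>. restrict (\<lambda>i. Y i \<omega>) {i}))
    (borel \<Otimes>\<^sub>M borel) ((\<lambda>f. (x, Min ((\<lambda>j. dist x (f j)) ` J))) \<circ> (\<lambda>\<omega>. restrict (\<lambda>i. Y i \<omega>) J))"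
  proof (rule indep_var_compose[OF indep_var_restrict[OF indep]])
    show "(\<lambda>f. (f i, 0::real)) \<in> measurable (Pi\<^sub>M {i} (\<lambda>_. borel)) (borel \<Otimes>\<^sub>M borel)"
      by measurable
    have "(\<lambda>f. Min ((\<lambda>j. dist x (f j)) ` J)) \<in> borel_measurable (Pi\<^sub>M J (\<lambda>_. borel))"
      using assms
      by (intro borel_measurable_Min)
         (auto intro!: measurable_compose[OF _ borel_measurable_dist_x] measurable_component_singleton)
    then show "(\<lambda>f. (x, Min ((\<lambda>j. dist x (f j)) ` J))) \<in> measurable (Pi\<^sub>M J (\<lambda>_. borel)) (borel \<Otimes>\<^sub>M borel)"
      by measurable
  qed (use assms in auto)
  also have "(\<lambda>f. (x, Min ((\<lambda>j. dist x (f j)) ` J))) \<circ> (\<lambda>\<omega>. restrict (\<lambda>i. Y i \<omega>) J) = (\<lambda>\<omega>. (x, min_dY J \<omega>))"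
    using assms by (auto simp: min_dY_def dY_def fun_eq_iff intro!: arg_cong[where f=Min] image_cong)
  finally show ?thesis by (simp add: comp_def)
qed

lemma integral_Y_min_dY:
  fixes g :: "'a \<Rightarrow> real" and h :: "real \<Rightarrow> real \<Rightarrow> real"
  assumes J: "finite J" "i \<notin> J"
    and [measurable]: "g \<in> borel_measurable borel" and g_bound: "\<And>y. \<bar>g y\<bar> \<le> c"
    and h: "(\<lambda>p. h (fst p) (snd p)) \<in> borel_measurable (borel \<Otimes>\<^sub>M borel)"
    and h_bound: "\<And>s w. \<bar>h s w\<bar> \<le> 1"
  shows "(\<integral>\<omega>. g (Y i \<omega>) * h (dY i \<omega>) (min_dY J \<omega>) \<partial>M)
       = (\<integral>\<omega>. g (Y 0 \<omega>) * (\<integral>\<omega>'. h (dY 0 \<omega>) (min_dY J \<omega>') \<partial>M) \<partial>M)"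
proof -
  note measurable_min_dY[OF J(1), measurable]
  have [measurable (raw)]: "(\<lambda>z. h (f1 z) (f2 z)) \<in> borel_measurable N"
    if "f1 \<in> borel_measurable N" "f2 \<in> borel_measurable N" for f1 f2 and N :: "'b measure"
    using measurable_compose[OF measurable_Pair[OF that] h] by simp
  define f where "f pq = g (fst (fst pq)) * h (dist x (fst (fst pq))) (snd (snd pq))"
    for pq :: "('a \<times> real) \<times> ('a \<times> real)"
  have [measurable]: "f \<in> borel_measurable ((borel \<Otimes>\<^sub>M borel) \<Otimes>\<^sub>M (borel \<Otimes>\<^sub>M borel))"
    unfolding f_def by measurable
  have f_bound: "\<bar>f pq\<bar> \<le> c * 1" for pq
    unfolding f_def abs_mult using g_bound h_bound order_trans[OF abs_ge_zero g_bound]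
    by (intro mult_mono) auto
  have [measurable]: "(\<lambda>y. g y * (\<integral>\<omega>'. h (dist x y) (min_dY J \<omega>') \<partial>M)) \<in> borel_measurable borel"
    by measurable
  have "(\<integral>\<omega>. g (Y i \<omega>) * h (dY i \<omega>) (min_dY J \<omega>) \<partial>M) = (\<integral>\<omega>. f ((Y i \<omega>, 0), (x, min_dY J \<omega>)) \<partial>M)"
    by (simp add: f_def dY_def)
  also have "\<dots> = (\<integral>\<omega>. (\<integral>\<omega>'. f ((Y i \<omega>, 0), (x, min_dY J \<omega>')) \<partial>M) \<partial>M)"
    by (rule integral_indep_var[OF indep_var_Y_min_dY[OF J] _ f_bound]) measurable
  also have "\<dots> = (\<integral>\<omega>. g (Y i \<omega>) * (\<integral>\<omega>'. h (dist x (Y i \<omega>)) (min_dY J \<omega>') \<partial>M) \<partial>M)"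
    by (simp add: f_def)
  also have "\<dots> = (\<integral>\<omega>. g (Y 0 \<omega>) * (\<integral>\<omega>'. h (dist x (Y 0 \<omega>)) (min_dY J \<omega>') \<partial>M) \<partial>M)"
    by (rule integral_Y_eq_Y0) measurable
  finally show ?thesis by (simp add: dY_def)
qed

lemma integral_Y_nearest:
  fixes g :: "'a \<Rightarrow> real"
  assumes m: "m \<ge> 2" and i: "i \<in> {1..m}"
    and [measurable]: "g \<in> borel_measurable borel" and g_bound: "\<And>y. \<bar>g y\<bar> \<le> c"
  shows "(\<integral>\<omega>. g (Y i \<omega>) * of_bool (dY i \<omega> \<le> min_dY (others m i) \<omega>) \<partial>M)
       = (\<integral>\<omega>. g (Y 0 \<omega>) * tail_prob (dY 0 \<omega>) ^ (m - 1) \<partial>M)"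
    and "(\<integral>\<omega>. g (Y i \<omega>) * of_bool (dY i \<omega> < min_dY (others m i) \<omega>) \<partial>M)
       = (\<integral>\<omega>. g (Y 0 \<omega>) * (1 - ball_prob (dY 0 \<omega>)) ^ (m - 1) \<partial>M)"
proof -
  note J = others_finite_nonempty_card[OF m i]
  note measurable_min_dY[OF J(1), measurable]
  have le: "(\<integral>\<omega>'. of_bool (t \<le> min_dY (others m i) \<omega>') \<partial>M) = tail_prob t ^ (m - 1)" for t
  proof -
    have "(\<integral>\<omega>'. of_bool (t \<le> min_dY (others m i) \<omega>') \<partial>M) = prob {\<omega>'\<in>space M. t \<le> min_dY (others m i) \<omega>'}"
      by (rule integral_of_bool)
    then show ?thesis using prob_all_dY_ge[OF J(1)] J(4) by (simp add: min_dY_iff[OF J(1,2)])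
  qed
  have less: "(\<integral>\<omega>'. of_bool (t < min_dY (others m i) \<omega>') \<partial>M) = (1 - ball_prob t) ^ (m - 1)" for t
  proof -
    have "(\<integral>\<omega>'. of_bool (t < min_dY (others m i) \<omega>') \<partial>M) = prob {\<omega>'\<in>space M. t < min_dY (others m i) \<omega>'}"
      by (rule integral_of_bool)
    then show ?thesis using prob_all_dY_gt[OF J(1)] J(4) by (simp add: min_dY_iff[OF J(1,2)])
  qed
  show "(\<integral>\<omega>. g (Y i \<omega>) * of_bool (dY i \<omega> \<le> min_dY (others m i) \<omega>) \<partial>M)
       = (\<integral>\<omega>. g (Y 0 \<omega>) * tail_prob (dY 0 \<omega>) ^ (m - 1) \<partial>M)"
    using integral_Y_min_dY[where g=g and h="\<lambda>s w. of_bool (s \<le> w)", OF J(1,3) _ g_bound] by (simp add: le)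
  show "(\<integral>\<omega>. g (Y i \<omega>) * of_bool (dY i \<omega> < min_dY (others m i) \<omega>) \<partial>M)
       = (\<integral>\<omega>. g (Y 0 \<omega>) * (1 - ball_prob (dY 0 \<omega>)) ^ (m - 1) \<partial>M)"
    using integral_Y_min_dY[where g=g and h="\<lambda>s w. of_bool (s < w)", OF J(1,3) _ g_bound] by (simp add: less)
qed

lemma obtain_nearest_index:
  assumes m: "m \<ge> 2" and \<omega>: "\<omega> \<in> space M"
  obtains i where "i \<in> {1..m}" "NN m \<omega> = Y i \<omega>" "dNN m \<omega> = dY i \<omega>" "dY i \<omega> \<le> min_dY (others m i) \<omega>"
proof -
  have m1: "m \<ge> 1" using m by simp
  obtain i where i: "i \<in> {1..m}" "NN m \<omega> = Y i \<omega>" "dNN m \<omega> = dY i \<omega>"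
    using dNN_attained[OF m1 \<omega>] by blast
  moreover have "dY i \<omega> \<le> min_dY (others m i) \<omega>"
    unfolding min_dY_iff(1)[OF others_finite_nonempty_card(1,2)[OF m i(1)]] using dNN_le[OF m1 \<omega>] i by (auto simp: others_def)
  ultimately show ?thesis using that by blast
qed

lemma strictly_nearest_unique:
  assumes "m \<ge> 2" "i \<in> {1..m}" "j \<in> {1..m}"
    and "dY i \<omega> < min_dY (others m i) \<omega>" "dY j \<omega> < min_dY (others m j) \<omega>"
  shows "i = j"
proof (rule ccontr)
  assume "i \<noteq> j"
  then have "j \<in> others m i" "i \<in> others m j" using assms(2,3) by (auto simp: others_def)
  then have "dY i \<omega> < dY j \<omega>" "dY j \<omega> < dY i \<omega>"
    using assms min_dY_iff(2)[OF others_finite_nonempty_card(1,2)[OF assms(1,2)]] min_dY_iff(2)[OF others_finite_nonempty_card(1,2)[OF assms(1,3)]]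
    by auto
  then show False by simp
qed

text \<open>Union bound over the index of the nearest sample; off the atoms \<open>nn_density m\<close> is
  \<open>m\<close> times the probability that a given sample is nearer than the \<open>m - 1\<close> others.\<close>

lemma integral_err_NN_nonatomic_le:
  assumes m: "m \<ge> 2" and [measurable]: "S \<in> sets borel" and S: "S \<inter> atoms = {}"
  shows "(\<integral>\<omega>. err (NN m \<omega>) * indicator S (dNN m \<omega>) \<partial>M)
     \<le> (\<integral>\<omega>. err (Y 0 \<omega>) * nn_density m (dY 0 \<omega>) * indicator S (dY 0 \<omega>) \<partial>M)"
proof -
  have m1: "m \<ge> 1" using m by simp
  note measurable_NN[OF m1, measurable] measurable_dNN[OF m1, measurable]
  define g where "g y = err y * indicator S (dist x y)" for y
  have [measurable]: "g \<in> borel_measurable borel" unfolding g_def by measurable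
  have g_nonneg: "0 \<le> g y" and g_bound: "\<bar>g y\<bar> \<le> 2 * B" for y
    unfolding g_def using err_le[of y] err_nonneg[of y] B_nonneg by (auto split: split_indicator)
  define T where "T i \<omega> = g (Y i \<omega>) * of_bool (dY i \<omega> \<le> min_dY (others m i) \<omega>)" for i \<omega>
  have measurable_T: "T i \<in> borel_measurable M" if "i \<in> {1..m}" for i
    unfolding T_def using others_finite_nonempty_card(1)[OF m that] by measurable
  have integrable_T: "integrable M (T i)" if "i \<in> {1..m}" for i
    by (rule integrable_real_bounded[where C="2*B"])
      (use measurable_T[OF that] g_bound B_nonneg in \<open>auto simp: T_def abs_mult\<close>)
  have "err (NN m \<omega>) * indicator S (dNN m \<omega>) \<le> (\<Sum>i\<in>{1..m}. T i \<omega>)" if \<omega>: "\<omega> \<in> space M" for \<omega>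
  proof -
    obtain i where i: "i \<in> {1..m}" "NN m \<omega> = Y i \<omega>" "dNN m \<omega> = dY i \<omega>" "dY i \<omega> \<le> min_dY (others m i) \<omega>"
      using obtain_nearest_index[OF m \<omega>] .
    then have "err (NN m \<omega>) * indicator S (dNN m \<omega>) = T i \<omega>" by (simp add: T_def g_def dY_def)
    also have "\<dots> \<le> (\<Sum>i\<in>{1..m}. T i \<omega>)"
      using i(1) g_nonneg by (intro member_le_sum) (auto simp: T_def)
    finally show ?thesis .
  qed
  then have "(\<integral>\<omega>. err (NN m \<omega>) * indicator S (dNN m \<omega>) \<partial>M) \<le> (\<integral>\<omega>. (\<Sum>i\<in>{1..m}. T i \<omega>) \<partial>M)"
    using integrable_T by (intro integral_mono integrable_err_NN_indicator m1) auto
  also have "\<dots> = (\<Sum>i\<in>{1..m}. \<integral>\<omega>. T i \<omega> \<partial>M)"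
    using integrable_T by (intro Bochner_Integration.integral_sum) auto
  also have "\<dots> = (\<Sum>i\<in>{1..m}. \<integral>\<omega>. g (Y 0 \<omega>) * tail_prob (dY 0 \<omega>) ^ (m - 1) \<partial>M)"
    unfolding T_def by (intro sum.cong refl integral_Y_nearest(1)[OF m _ _ g_bound]) auto
  also have "\<dots> = (\<integral>\<omega>. g (Y 0 \<omega>) * (real m * tail_prob (dY 0 \<omega>) ^ (m - 1)) \<partial>M)"
    by (simp add: ac_simps)
  also have "\<dots> = (\<integral>\<omega>. err (Y 0 \<omega>) * nn_density m (dY 0 \<omega>) * indicator S (dY 0 \<omega>) \<partial>M)"
    using S by (intro Bochner_Integration.integral_cong)
      (auto simp: g_def dY_def nn_density_nonatomic disjoint_iff split: split_indicator)
  finally show ?thesis .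
qed

lemma integral_nn_density_nonatomic_le_1:
  assumes m: "m \<ge> 2" and [measurable]: "S \<in> sets borel" and S: "S \<inter> atoms = {}"
  shows "(\<integral>\<omega>. nn_density m (dY 0 \<omega>) * indicator S (dY 0 \<omega>) \<partial>M) \<le> 1"
proof -
  have m1: "m \<ge> 1" using m by simp
  define g where "g y = (indicator S (dist x y) :: real)" for y
  have [measurable]: "g \<in> borel_measurable borel" unfolding g_def by measurable
  have g_bound: "\<bar>g y\<bar> \<le> 1" for y unfolding g_def by (auto split: split_indicator)
  define T where "T i \<omega> = g (Y i \<omega>) * of_bool (dY i \<omega> < min_dY (others m i) \<omega>)" for i \<omega>
  have measurable_T: "T i \<in> borel_measurable M" if "i \<in> {1..m}" for i
    unfolding T_def using others_finite_nonempty_card(1)[OF m that] by measurable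
  have integrable_T: "integrable M (T i)" if "i \<in> {1..m}" for i
    by (rule integrable_real_bounded[where C=1])
      (use measurable_T[OF that] g_bound in \<open>auto simp: T_def abs_mult\<close>)
  have sum_T_le_1: "(\<Sum>i\<in>{1..m}. T i \<omega>) \<le> 1" for \<omega>
  proof -
    have "(\<Sum>i\<in>{1..m}. T i \<omega>) \<le> (\<Sum>i\<in>{1..m}. of_bool (dY i \<omega> < min_dY (others m i) \<omega>))"
      by (intro sum_mono) (auto simp: T_def g_def split: split_indicator)
    also have "\<dots> = real (card ({1..m} \<inter> {i. dY i \<omega> < min_dY (others m i) \<omega>}))" by simp
    also have "\<dots> \<le> 1"
      using strictly_nearest_unique[OF m] by (auto simp: card_le_Suc0_iff_eq)
    finally show ?thesis .
  qed
  have "(\<integral>\<omega>. nn_density m (dY 0 \<omega>) * indicator S (dY 0 \<omega>) \<partial>M)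
      = (\<integral>\<omega>. g (Y 0 \<omega>) * (real m * (1 - ball_prob (dY 0 \<omega>)) ^ (m - 1)) \<partial>M)"
    using S by (intro Bochner_Integration.integral_cong)
      (auto simp: g_def dY_def nn_density_nonatomic tail_prob_nonatomic disjoint_iff split: split_indicator)
  also have "\<dots> = (\<Sum>i\<in>{1..m}. \<integral>\<omega>. g (Y 0 \<omega>) * (1 - ball_prob (dY 0 \<omega>)) ^ (m - 1) \<partial>M)"
    by (simp add: ac_simps)
  also have "\<dots> = (\<Sum>i\<in>{1..m}. \<integral>\<omega>. T i \<omega> \<partial>M)"
    unfolding T_def by (intro sum.cong refl integral_Y_nearest(2)[OF m _ _ g_bound, symmetric]) auto
  also have "\<dots> = (\<integral>\<omega>. (\<Sum>i\<in>{1..m}. T i \<omega>) \<partial>M)"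
    using integrable_T by (intro Bochner_Integration.integral_sum[symmetric]) auto
  also have "\<dots> \<le> (\<integral>\<omega>. 1 \<partial>M)"
    using integrable_T sum_T_le_1 by (intro integral_mono) auto
  finally show ?thesis by (simp add: prob_space)
qed

lemma integrable_err_nn_density_indicator:
  assumes "m \<ge> 1" and [measurable]: "S \<in> sets borel"
  shows "integrable M (\<lambda>\<omega>. err (Y 0 \<omega>) * nn_density m (dY 0 \<omega>) * indicator S (dY 0 \<omega>))"
proof (rule integrable_real_bounded[where C="2 * B * real m"])
  show "(\<lambda>\<omega>. err (Y 0 \<omega>) * nn_density m (dY 0 \<omega>) * indicator S (dY 0 \<omega>)) \<in> borel_measurable M"
    using assms by measurable
  have "err (Y 0 \<omega>) * nn_density m (dY 0 \<omega>) \<le> 2 * B * real m" for \<omega>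
    using err_le err_nonneg nn_density_le[OF assms(1)] nn_density_nonneg[OF assms(1)] B_nonneg
    by (intro mult_mono) auto
  then show "\<bar>err (Y 0 \<omega>) * nn_density m (dY 0 \<omega>) * indicator S (dY 0 \<omega>)\<bar> \<le> 2 * B * real m" for \<omega>
    using err_nonneg[of "Y 0 \<omega>"] nn_density_nonneg[OF assms(1), of "dY 0 \<omega>"] B_nonneg
    by (auto split: split_indicator)
qed

lemma integral_err_NN_sphere_le:
  assumes "0 \<le> C" and m: "m \<ge> 1" and "0 < sphere_prob r"
    and conditional_le: "(\<integral>\<omega>. err (NN m \<omega>) * indicator {r} (dNN m \<omega>) \<partial>M) / prob {\<omega>\<in>space M. dNN m \<omega> = r}
        \<le> C * ((\<integral>\<omega>. err (Y 0 \<omega>) * indicator {r} (dY 0 \<omega>) \<partial>M) / sphere_prob r)"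
  shows "(\<integral>\<omega>. err (NN m \<omega>) * indicator {r} (dNN m \<omega>) \<partial>M)
    \<le> (\<integral>\<omega>. C * err (Y 0 \<omega>) * nn_density m (dY 0 \<omega>) * indicator {r} (dY 0 \<omega>) \<partial>M)"
proof -
  note measurable_NN[OF m, measurable] measurable_dNN[OF m, measurable]
  define a where "a = (\<integral>\<omega>. err (NN m \<omega>) * indicator {r} (dNN m \<omega>) \<partial>M)"
  define b where "b = (\<integral>\<omega>. err (Y 0 \<omega>) * indicator {r} (dY 0 \<omega>) \<partial>M)"
  define q where "q = prob {\<omega>\<in>space M. dNN m \<omega> = r}"
  have "0 \<le> b" unfolding b_def
    by (intro integral_nonneg_AE AE_I2) (use err_nonneg in \<open>auto split: split_indicator\<close>)
  have "(\<integral>\<omega>. C * err (Y 0 \<omega>) * nn_density m (dY 0 \<omega>) * indicator {r} (dY 0 \<omega>) \<partial>M)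
      = (\<integral>\<omega>. C * nn_density m r * (err (Y 0 \<omega>) * indicator {r} (dY 0 \<omega>)) \<partial>M)"
    by (intro Bochner_Integration.integral_cong refl) (auto split: split_indicator)
  also have "\<dots> = C * (q / sphere_prob r) * b"
    using \<open>0 < sphere_prob r\<close> by (simp add: nn_density_def q_def b_def)
  finally have rhs: "(\<integral>\<omega>. C * err (Y 0 \<omega>) * nn_density m (dY 0 \<omega>) * indicator {r} (dY 0 \<omega>) \<partial>M)
      = C * (q / sphere_prob r) * b" .
  show ?thesis
  proof (cases "q > 0")
    case True
    then have "a \<le> C * (b / sphere_prob r) * q"
      using conditional_le by (simp add: a_def b_def q_def pos_divide_le_eq)
    then show ?thesis unfolding rhs a_def[symmetric] by (simp add: field_simps)
  next
    case False
    then have "q = 0" unfolding q_def using measure_nonneg[of M] by (metis less_eq_real_def)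
    have "a \<le> (\<integral>\<omega>. 2 * B * indicator {r} (dNN m \<omega>) \<partial>M)"
      unfolding a_def using err_le B_nonneg
      by (intro integral_mono integrable_err_NN_indicator[OF m] integrable_real_bounded[where C="2*B"])
        (auto split: split_indicator)
    also have "\<dots> = 0"
      using integral_indicator_comp[of "{r}" "dNN m"] \<open>q = 0\<close> by (simp add: q_def)
    finally show ?thesis
      unfolding rhs a_def[symmetric] \<open>q = 0\<close> by simp
  qed
qed

lemma integral_err_NN_atomic_le:
  assumes m: "m \<ge> 1" and A: "A \<subseteq> atoms" and "0 \<le> C"
    and sphere_le: "\<And>r. r \<in> A \<Longrightarrow> (\<integral>\<omega>. err (NN m \<omega>) * indicator {r} (dNN m \<omega>) \<partial>M)
      \<le> (\<integral>\<omega>. C * err (Y 0 \<omega>) * nn_density m (dY 0 \<omega>) * indicator {r} (dY 0 \<omega>) \<partial>M)"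
  shows "(\<integral>\<omega>. err (NN m \<omega>) * indicator A (dNN m \<omega>) \<partial>M)
     \<le> C * (\<integral>\<omega>. err (Y 0 \<omega>) * nn_density m (dY 0 \<omega>) * indicator A (dY 0 \<omega>) \<partial>M)"
proof -
  note measurable_NN[OF m, measurable] measurable_dNN[OF m, measurable] measurable_nn_density[OF m, measurable]
  have "(\<integral>\<omega>. err (NN m \<omega>) * indicator A (dNN m \<omega>) \<partial>M)
      \<le> (\<integral>\<omega>. C * err (Y 0 \<omega>) * nn_density m (dY 0 \<omega>) * indicator A (dY 0 \<omega>) \<partial>M)"
  proof (rule integral_indicator_countable_mono[where cf="2*B" and cg="C * (2 * B) * real m"])
    show "C * err (Y 0 \<omega>) * nn_density m (dY 0 \<omega>) \<le> C * (2 * B) * real m" for \<omega>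
      using err_le err_nonneg nn_density_le[OF m] nn_density_nonneg[OF m] B_nonneg \<open>0 \<le> C\<close>
      by (intro mult_mono mult_left_mono) auto
  qed (use err_le err_nonneg nn_density_nonneg[OF m] \<open>0 \<le> C\<close> sphere_le
         countable_subset[OF A countable_atoms] in auto)
  then show ?thesis by (simp add: mult.assoc)
qed

lemma integral_nn_density_atomic_le_1:
  assumes m: "m \<ge> 1"
  shows "(\<integral>\<omega>. nn_density m (dY 0 \<omega>) * indicator atoms (dY 0 \<omega>) \<partial>M) \<le> 1"
proof -
  note measurable_dNN[OF m, measurable] measurable_nn_density[OF m, measurable]
  have "(\<integral>\<omega>. nn_density m (dY 0 \<omega>) * indicator atoms (dY 0 \<omega>) \<partial>M) \<le> (\<integral>\<omega>. 1 * indicator atoms (dNN m \<omega>) \<partial>M)"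
  proof (rule integral_indicator_countable_mono[where cf="real m" and cg=1])
    fix r assume "r \<in> atoms"
    then have "0 < sphere_prob r" by (simp add: atoms_def)
    have "(\<integral>\<omega>. nn_density m (dY 0 \<omega>) * indicator {r} (dY 0 \<omega>) \<partial>M)
        = (\<integral>\<omega>. nn_density m r * indicator {r} (dY 0 \<omega>) \<partial>M)"
      by (intro Bochner_Integration.integral_cong refl) (auto split: split_indicator)
    also have "\<dots> = nn_density m r * sphere_prob r"
      using integral_indicator_comp[of "{r}" "dY 0"] by (simp add: sphere_prob_def)
    also have "\<dots> = (\<integral>\<omega>. 1 * indicator {r} (dNN m \<omega>) \<partial>M)"
      using \<open>0 < sphere_prob r\<close> integral_indicator_comp[of "{r}" "dNN m"] by (simp add: nn_density_def)
    finally show "(\<integral>\<omega>. nn_density m (dY 0 \<omega>) * indicator {r} (dY 0 \<omega>) \<partial>M)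
        \<le> (\<integral>\<omega>. 1 * indicator {r} (dNN m \<omega>) \<partial>M)" by simp
  qed (use nn_density_nonneg[OF m] nn_density_le[OF m] countable_atoms in auto)
  also have "\<dots> \<le> 1"
    using integral_indicator_comp[of atoms "dNN m"] by simp
  finally show ?thesis .
qed

lemma integral_nn_density_le_2:
  assumes m: "m \<ge> 2"
  shows "(\<integral>\<omega>. nn_density m (dY 0 \<omega>) \<partial>M) \<le> 2"
proof -
  have m1: "m \<ge> 1" using m by simp
  note measurable_nn_density[OF m1, measurable]
  have integrable: "integrable M (\<lambda>\<omega>. nn_density m (dY 0 \<omega>) * indicator S (dY 0 \<omega>))"
    if [measurable]: "S \<in> sets borel" for S
    using nn_density_le[OF m1] nn_density_nonneg[OF m1]
    by (intro integrable_real_bounded[where C="real m"]) (auto split: split_indicator)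
  have "(\<integral>\<omega>. nn_density m (dY 0 \<omega>) \<partial>M)
      = (\<integral>\<omega>. nn_density m (dY 0 \<omega>) * indicator atoms (dY 0 \<omega>)
            + nn_density m (dY 0 \<omega>) * indicator (- atoms) (dY 0 \<omega>) \<partial>M)"
    by (intro Bochner_Integration.integral_cong) (auto split: split_indicator)
  also have "\<dots> = (\<integral>\<omega>. nn_density m (dY 0 \<omega>) * indicator atoms (dY 0 \<omega>) \<partial>M)
      + (\<integral>\<omega>. nn_density m (dY 0 \<omega>) * indicator (- atoms) (dY 0 \<omega>) \<partial>M)"
    using integrable by (intro Bochner_Integration.integral_add) auto
  also have "\<dots> \<le> 1 + 1"
    by (intro add_mono integral_nn_density_atomic_le_1[OF m1] integral_nn_density_nonatomic_le_1[OF m]) auto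
  finally show ?thesis by simp
qed

lemma integral_err_NN_near_le_density:
  assumes m: "m \<ge> 2" and "0 \<le> C"
    and sphere_le: "\<And>r. r \<in> atoms \<Longrightarrow> 0 < r \<Longrightarrow> r \<le> \<delta> \<Longrightarrow>
      (\<integral>\<omega>. err (NN m \<omega>) * indicator {r} (dNN m \<omega>) \<partial>M)
      \<le> (\<integral>\<omega>. C * err (Y 0 \<omega>) * nn_density m (dY 0 \<omega>) * indicator {r} (dY 0 \<omega>) \<partial>M)"
  shows "(\<integral>\<omega>. err (NN m \<omega>) * indicator {..\<delta>} (dNN m \<omega>) \<partial>M)
    \<le> max C 1 * (\<integral>\<omega>. err (Y 0 \<omega>) * nn_density m (dY 0 \<omega>) * indicator {..\<delta>} (dY 0 \<omega>) \<partial>M)"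
proof -
  have m1: "m \<ge> 1" using m by simp
  note measurable_NN[OF m1, measurable] measurable_dNN[OF m1, measurable] measurable_nn_density[OF m1, measurable]
  define A where "A = atoms \<inter> {0<..\<delta>}"
  define N where "N = {..\<delta>} - atoms"
  have [measurable]: "A \<in> sets borel" "N \<in> sets borel" unfolding A_def N_def by measurable
  define I where "I S = (\<integral>\<omega>. err (Y 0 \<omega>) * nn_density m (dY 0 \<omega>) * indicator S (dY 0 \<omega>) \<partial>M)" for S
  have I_nonneg: "0 \<le> I S" for S
    unfolding I_def using err_nonneg nn_density_nonneg[OF m1]
    by (intro integral_nonneg_AE AE_I2) (auto split: split_indicator)
  have "err (NN m \<omega>) * indicator {..\<delta>} (dNN m \<omega>)
      = err (NN m \<omega>) * indicator A (dNN m \<omega>) + err (NN m \<omega>) * indicator N (dNN m \<omega>)" for \<omega>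
    using dNN_nonneg[of m \<omega>] err_x
    by (cases "dNN m \<omega> = 0") (auto simp: A_def N_def dNN_def split: split_indicator)
  then have "(\<integral>\<omega>. err (NN m \<omega>) * indicator {..\<delta>} (dNN m \<omega>) \<partial>M)
      = (\<integral>\<omega>. err (NN m \<omega>) * indicator A (dNN m \<omega>) \<partial>M) + (\<integral>\<omega>. err (NN m \<omega>) * indicator N (dNN m \<omega>) \<partial>M)"
    by (simp add: Bochner_Integration.integral_add integrable_err_NN_indicator[OF m1])
  also have "\<dots> \<le> C * I A + I N"
    unfolding I_def using sphere_le
    by (intro add_mono integral_err_NN_atomic_le[OF m1 _ \<open>0 \<le> C\<close>] integral_err_NN_nonatomic_le[OF m])
       (auto simp: A_def N_def)
  also have "\<dots> \<le> max C 1 * (I A + I N)"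
    using mult_right_mono[OF max.cobounded1[of C 1] I_nonneg[of A]]
      mult_right_mono[OF max.cobounded2[of 1 C] I_nonneg[of N]]
    by (simp add: distrib_left)
  also have "I A + I N \<le> I {..\<delta>}"
  proof -
    have "I A + I N = (\<integral>\<omega>. err (Y 0 \<omega>) * nn_density m (dY 0 \<omega>) * indicator A (dY 0 \<omega>)
        + err (Y 0 \<omega>) * nn_density m (dY 0 \<omega>) * indicator N (dY 0 \<omega>) \<partial>M)"
      unfolding I_def by (simp add: Bochner_Integration.integral_add integrable_err_nn_density_indicator[OF m1])
    also have "\<dots> \<le> I {..\<delta>}"
      unfolding I_def using err_nonneg nn_density_nonneg[OF m1]
      by (intro integral_mono integrable_err_nn_density_indicator[OF m1] Bochner_Integration.integrable_add)
         (auto simp: A_def N_def split: split_indicator)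
    finally show ?thesis .
  qed
  finally show ?thesis
    by (simp add: I_def mult_left_mono)
qed

lemma integral_err_nn_density_le:
  assumes m: "m \<ge> 1" and "0 \<le> \<epsilon>"
    and lebesgue_le: "\<And>s. 0 < s \<Longrightarrow> s \<le> \<delta> \<Longrightarrow>
      (\<integral>\<omega>. err (Y 0 \<omega>) * indicator {..s} (dY 0 \<omega>) \<partial>M) \<le> \<epsilon> * ball_prob s"
  shows "(\<integral>\<omega>. err (Y 0 \<omega>) * nn_density m (dY 0 \<omega>) * indicator {..\<delta>} (dY 0 \<omega>) \<partial>M)
    \<le> \<epsilon> * (\<integral>\<omega>. nn_density m (dY 0 \<omega>) * indicator {..\<delta>} (dY 0 \<omega>) \<partial>M)"
proof -
  note measurable_nn_density[OF m, measurable]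
  have "(\<integral>\<omega>. err (Y 0 \<omega>) * indicator {..s} (dY 0 \<omega>) \<partial>M) \<le> \<epsilon> * prob {\<omega>\<in>space M. dY 0 \<omega> \<le> s}"
    if "s \<le> \<delta>" for s
  proof (cases "0 < s")
    case True
    then show ?thesis using lebesgue_le \<open>s \<le> \<delta>\<close> by (simp add: ball_prob_def)
  next
    case False
    have "(\<lambda>\<omega>. err (Y 0 \<omega>) * indicator {..s} (dY 0 \<omega>)) = (\<lambda>_. 0)"
    proof
      fix \<omega>
      show "err (Y 0 \<omega>) * indicator {..s} (dY 0 \<omega>) = 0"
      proof (cases "dY 0 \<omega> \<le> s")
        case True
        with False have "dist x (Y 0 \<omega>) \<le> 0" unfolding dY_def by linarith
        then have "Y 0 \<omega> = x" by simp
        then show ?thesis by (simp add: err_x)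
      qed simp
    qed
    then show ?thesis using \<open>0 \<le> \<epsilon>\<close> by simp
  qed
  then show ?thesis
    using err_le err_nonneg nn_density_le[OF m] nn_density_nonneg[OF m] nn_density_antimono[OF m] \<open>0 \<le> \<epsilon>\<close>
    by (intro integral_antimono_weight_le[where cw="2*B" and ck="real m"]) auto
qed

lemma integral_err_NN_near_le:
  assumes m: "m \<ge> 2" and "0 \<le> C" and "0 \<le> \<epsilon>"
    and sphere_le: "\<And>r. r \<in> atoms \<Longrightarrow> 0 < r \<Longrightarrow> r \<le> \<delta> \<Longrightarrow>
      (\<integral>\<omega>. err (NN m \<omega>) * indicator {r} (dNN m \<omega>) \<partial>M)
      \<le> (\<integral>\<omega>. C * err (Y 0 \<omega>) * nn_density m (dY 0 \<omega>) * indicator {r} (dY 0 \<omega>) \<partial>M)"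
    and lebesgue_le: "\<And>s. 0 < s \<Longrightarrow> s \<le> \<delta> \<Longrightarrow>
      (\<integral>\<omega>. err (Y 0 \<omega>) * indicator {..s} (dY 0 \<omega>) \<partial>M) \<le> \<epsilon> * ball_prob s"
  shows "(\<integral>\<omega>. err (NN m \<omega>) * indicator {..\<delta>} (dNN m \<omega>) \<partial>M) \<le> 2 * max C 1 * \<epsilon>"
proof -
  have m1: "m \<ge> 1" using m by simp
  note measurable_nn_density[OF m1, measurable]
  have "(\<integral>\<omega>. nn_density m (dY 0 \<omega>) * indicator {..\<delta>} (dY 0 \<omega>) \<partial>M) \<le> (\<integral>\<omega>. nn_density m (dY 0 \<omega>) \<partial>M)"
    using nn_density_le[OF m1] nn_density_nonneg[OF m1]
    by (intro integral_mono integrable_real_bounded[where C="real m"]) (auto split: split_indicator)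
  also have "\<dots> \<le> 2" by (rule integral_nn_density_le_2[OF m])
  finally have mass: "(\<integral>\<omega>. nn_density m (dY 0 \<omega>) * indicator {..\<delta>} (dY 0 \<omega>) \<partial>M) \<le> 2" .
  have "(\<integral>\<omega>. err (NN m \<omega>) * indicator {..\<delta>} (dNN m \<omega>) \<partial>M)
      \<le> max C 1 * (\<integral>\<omega>. err (Y 0 \<omega>) * nn_density m (dY 0 \<omega>) * indicator {..\<delta>} (dY 0 \<omega>) \<partial>M)"
    by (rule integral_err_NN_near_le_density[OF m \<open>0 \<le> C\<close> sphere_le])
  also have "\<dots> \<le> max C 1 * (\<epsilon> * (\<integral>\<omega>. nn_density m (dY 0 \<omega>) * indicator {..\<delta>} (dY 0 \<omega>) \<partial>M))"
    by (intro mult_left_mono integral_err_nn_density_le[OF m1 \<open>0 \<le> \<epsilon>\<close> lebesgue_le]) auto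
  also have "\<dots> \<le> max C 1 * (\<epsilon> * 2)"
    using mass \<open>0 \<le> \<epsilon>\<close> by (intro mult_left_mono) auto
  finally show ?thesis by (simp add: mult_ac)
qed

lemma integral_err_NN_far_le:
  assumes m: "m \<ge> 1"
  shows "(\<integral>\<omega>. err (NN m \<omega>) * indicator {\<delta><..} (dNN m \<omega>) \<partial>M) \<le> 2 * B * (1 - ball_prob \<delta>) ^ m"
proof -
  note measurable_dNN[OF m, measurable]
  have "(\<integral>\<omega>. err (NN m \<omega>) * indicator {\<delta><..} (dNN m \<omega>) \<partial>M) \<le> (\<integral>\<omega>. 2 * B * indicator {\<delta><..} (dNN m \<omega>) \<partial>M)"
    using err_le B_nonneg
    by (intro integral_mono integrable_err_NN_indicator[OF m] integrable_real_bounded[where C="2*B"])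
      (auto split: split_indicator)
  also have "\<dots> = 2 * B * prob {\<omega>\<in>space M. dNN m \<omega> \<in> {\<delta><..}}"
    using integral_indicator_comp[of "{\<delta><..}" "dNN m"] by simp
  also have "{\<omega>\<in>space M. dNN m \<omega> \<in> {\<delta><..}} = {\<omega>\<in>space M. \<forall>j\<in>{1..m}. \<delta> < dY j \<omega>}"
    using dNN_ge_iff(2)[OF m] by auto
  also have "2 * B * prob \<dots> = 2 * B * (1 - ball_prob \<delta>) ^ m"
    using prob_all_dY_gt[of "{1..m}" \<delta>] by simp
  finally show ?thesis .
qed

lemma integral_err_NN_le:
  assumes m: "m \<ge> 2" and "0 \<le> C" and "0 \<le> \<epsilon>"
    and sphere_le: "\<And>r. r \<in> atoms \<Longrightarrow> 0 < r \<Longrightarrow> r \<le> \<delta> \<Longrightarrow>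
      (\<integral>\<omega>. err (NN m \<omega>) * indicator {r} (dNN m \<omega>) \<partial>M)
      \<le> (\<integral>\<omega>. C * err (Y 0 \<omega>) * nn_density m (dY 0 \<omega>) * indicator {r} (dY 0 \<omega>) \<partial>M)"
    and lebesgue_le: "\<And>s. 0 < s \<Longrightarrow> s \<le> \<delta> \<Longrightarrow>
      (\<integral>\<omega>. err (Y 0 \<omega>) * indicator {..s} (dY 0 \<omega>) \<partial>M) \<le> \<epsilon> * ball_prob s"
  shows "(\<integral>\<omega>. err (NN m \<omega>) \<partial>M) \<le> 2 * max C 1 * \<epsilon> + 2 * B * (1 - ball_prob \<delta>) ^ m"
proof -
  have m1: "m \<ge> 1" using m by simp
  note measurable_NN[OF m1, measurable] measurable_dNN[OF m1, measurable]
  have "(\<integral>\<omega>. err (NN m \<omega>) \<partial>M)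
      = (\<integral>\<omega>. err (NN m \<omega>) * indicator {..\<delta>} (dNN m \<omega>) + err (NN m \<omega>) * indicator {\<delta><..} (dNN m \<omega>) \<partial>M)"
    by (intro Bochner_Integration.integral_cong) (auto split: split_indicator)
  also have "\<dots> = (\<integral>\<omega>. err (NN m \<omega>) * indicator {..\<delta>} (dNN m \<omega>) \<partial>M)
      + (\<integral>\<omega>. err (NN m \<omega>) * indicator {\<delta><..} (dNN m \<omega>) \<partial>M)"
    by (intro Bochner_Integration.integral_add integrable_err_NN_indicator m1) auto
  also have "\<dots> \<le> 2 * max C 1 * \<epsilon> + 2 * B * (1 - ball_prob \<delta>) ^ m"
    by (intro add_mono integral_err_NN_near_le[OF m \<open>0 \<le> C\<close> \<open>0 \<le> \<epsilon>\<close> sphere_le lebesgue_le]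
        integral_err_NN_far_le[OF m1])
  finally show ?thesis .
qed

lemma err_NN_tendsto_0:
  assumes "0 \<le> C" "0 < R"
    and conditional_le: "\<And>m r. m \<ge> m0 \<Longrightarrow> m \<ge> 1 \<Longrightarrow> 0 < r \<Longrightarrow> r < R \<Longrightarrow> 0 < sphere_prob r \<Longrightarrow>
      (\<integral>\<omega>. err (NN m \<omega>) * indicator {r} (dNN m \<omega>) \<partial>M) / prob {\<omega>\<in>space M. dNN m \<omega> = r}
      \<le> C * ((\<integral>\<omega>. err (Y 0 \<omega>) * indicator {r} (dY 0 \<omega>) \<partial>M) / sphere_prob r)"
    and ball_prob_pos: "\<And>r. 0 < r \<Longrightarrow> 0 < ball_prob r"
    and lebesgue: "((\<lambda>r. (\<integral>\<omega>. err (Y 0 \<omega>) * indicator {..r} (dY 0 \<omega>) \<partial>M) / ball_prob r) \<longlongrightarrow> 0) (at_right 0)"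
  shows "(\<lambda>m. \<integral>\<omega>. err (NN m \<omega>) \<partial>M) \<longlonglongrightarrow> 0"
proof (rule LIMSEQ_I)
  fix e :: real assume "0 < e"
  define \<epsilon> where "\<epsilon> = e / (4 * max C 1)"
  have "2 * max C 1 * \<epsilon> = e / 2" "0 < \<epsilon>"
    using \<open>0 < e\<close> max.cobounded2[of 1 C] by (simp_all add: \<epsilon>_def)
  obtain \<delta> where "0 < \<delta>" "\<delta> < R" and lebesgue_le: "\<And>s. 0 < s \<Longrightarrow> s \<le> \<delta> \<Longrightarrow>
      (\<integral>\<omega>. err (Y 0 \<omega>) * indicator {..s} (dY 0 \<omega>) \<partial>M) \<le> \<epsilon> * ball_prob s"
    using tendsto_at_right_0_ratio_le[OF lebesgue ball_prob_pos \<open>0 < \<epsilon>\<close> \<open>0 < R\<close>] by blast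
  have "0 \<le> 1 - ball_prob \<delta>" "1 - ball_prob \<delta> < 1"
    using ball_prob_le_1[of \<delta>] ball_prob_pos[OF \<open>0 < \<delta>\<close>] by auto
  then have "(\<lambda>n. 2 * B * (1 - ball_prob \<delta>) ^ n) \<longlonglongrightarrow> 0"
    by (intro tendsto_mult_right_zero LIMSEQ_power_zero) auto
  then obtain N where far: "\<And>n. n \<ge> N \<Longrightarrow> 2 * B * (1 - ball_prob \<delta>) ^ n < e / 2"
    using LIMSEQ_D[of _ 0 "e / 2"] \<open>0 < e\<close> by fastforce
  have "\<bar>\<integral>\<omega>. err (NN n \<omega>) \<partial>M\<bar> < e" if n: "n \<ge> max (max m0 2) N" for n
  proof -
    have "(\<integral>\<omega>. err (NN n \<omega>) \<partial>M) \<le> 2 * max C 1 * \<epsilon> + 2 * B * (1 - ball_prob \<delta>) ^ n"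
    proof (rule integral_err_NN_le[OF _ \<open>0 \<le> C\<close> _ _ lebesgue_le])
      fix r assume "r \<in> atoms" "0 < r" "r \<le> \<delta>"
      then show "(\<integral>\<omega>. err (NN n \<omega>) * indicator {r} (dNN n \<omega>) \<partial>M)
        \<le> (\<integral>\<omega>. C * err (Y 0 \<omega>) * nn_density n (dY 0 \<omega>) * indicator {r} (dY 0 \<omega>) \<partial>M)"
        using n \<open>\<delta> < R\<close> by (intro integral_err_NN_sphere_le \<open>0 \<le> C\<close> conditional_le) (auto simp: atoms_def)
    qed (use n \<open>0 < \<epsilon>\<close> in auto)
    also have "\<dots> < e" using far[of n] n \<open>2 * max C 1 * \<epsilon> = e / 2\<close> by simp
    finally show ?thesis
      using integral_nonneg_AE[of "\<lambda>\<omega>. err (NN n \<omega>)"] err_nonneg by simp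
  qed
  then show "\<exists>N. \<forall>n\<ge>N. norm ((\<integral>\<omega>. err (NN n \<omega>) \<partial>M) - 0) < e"
    by (intro exI[of _ "max (max m0 2) N"]) auto
qed

lemma expectation_err_NN_tendsto_0:
  assumes condB: "\<exists>C>0. \<exists>R>0. \<exists>m0::nat. \<forall>r m. 0 < r \<and> r < R \<and> m \<ge> m0 \<and> m \<ge> 1 \<and>
                   measure M {\<omega> \<in> space M. Y 0 \<omega> \<in> sphere x r} > 0 \<longrightarrow>
                   (expectation (\<lambda>\<omega>. indicator (sphere x r) (NN m \<omega>) * \<bar>\<eta> (NN m \<omega>) - \<eta> x\<bar>)
                      / measure M {\<omega> \<in> space M. NN m \<omega> \<in> sphere x r})
                   \<le> C * (expectation (\<lambda>\<omega>. indicator (sphere x r) (Y 0 \<omega>) * \<bar>\<eta> (Y 0 \<omega>) - \<eta> x\<bar>)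
                      / measure M {\<omega> \<in> space M. Y 0 \<omega> \<in> sphere x r})"
    and supp: "\<And>r. r > 0 \<Longrightarrow> measure M {\<omega> \<in> space M. Y 0 \<omega> \<in> cball x r} > 0"
    and lebesgue: "((\<lambda>r. expectation (\<lambda>\<omega>. indicator (cball x r) (Y 0 \<omega>) * \<bar>\<eta> (Y 0 \<omega>) - \<eta> x\<bar>)
                      / measure M {\<omega> \<in> space M. Y 0 \<omega> \<in> cball x r}) \<longlongrightarrow> 0) (at_right 0)"
  shows "(\<lambda>m. expectation (\<lambda>\<omega>. \<bar>\<eta> (NN m \<omega>) - \<eta> x\<bar>)) \<longlonglongrightarrow> 0"
proof -
  have sphere: "indicator (sphere x r) y * \<bar>\<eta> y - \<eta> x\<bar> = err y * indicator {r} (dist x y)"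
    and cball: "indicator (cball x r) y * \<bar>\<eta> y - \<eta> x\<bar> = err y * indicator {..r} (dist x y)" for r y
    by (auto simp: err_def split: split_indicator)
  have measure_sphere: "measure M {\<omega> \<in> space M. Z \<omega> \<in> sphere x r} = prob {\<omega>\<in>space M. dist x (Z \<omega>) = r}"
    and measure_cball: "measure M {\<omega> \<in> space M. Z \<omega> \<in> cball x r} = prob {\<omega>\<in>space M. dist x (Z \<omega>) \<le> r}"
    for Z :: "'m \<Rightarrow> 'a" and r
    by simp_all
  obtain C R m0 where "0 < C" "0 < R"
    and conditional_le: "\<And>m r. m \<ge> m0 \<Longrightarrow> m \<ge> 1 \<Longrightarrow> 0 < r \<Longrightarrow> r < R \<Longrightarrow> 0 < sphere_prob r \<Longrightarrow>
      (\<integral>\<omega>. err (NN m \<omega>) * indicator {r} (dNN m \<omega>) \<partial>M) / prob {\<omega>\<in>space M. dNN m \<omega> = r}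
      \<le> C * ((\<integral>\<omega>. err (Y 0 \<omega>) * indicator {r} (dY 0 \<omega>) \<partial>M) / sphere_prob r)"
    using condB unfolding sphere measure_sphere by (simp add: sphere_prob_def dY_def dNN_def) blast
  have "(\<lambda>m. \<integral>\<omega>. err (NN m \<omega>) \<partial>M) \<longlonglongrightarrow> 0"
  proof (rule err_NN_tendsto_0[OF _ \<open>0 < R\<close> conditional_le])
    show "0 \<le> C" using \<open>0 < C\<close> by simp
    show "0 < r \<Longrightarrow> 0 < ball_prob r" for r using supp by (simp add: ball_prob_def dY_def)
    show "((\<lambda>r. (\<integral>\<omega>. err (Y 0 \<omega>) * indicator {..r} (dY 0 \<omega>) \<partial>M) / ball_prob r) \<longlongrightarrow> 0) (at_right 0)"
      using lebesgue unfolding cball measure_cball by (simp add: ball_prob_def dY_def)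
  qed
  then show ?thesis by (simp add: err_def)
qed

end

theorem mainTheorem10:
  fixes M :: "'m measure"
    and Y :: "nat \<Rightarrow> 'm \<Rightarrow> 'a :: metric_space"
    and NN :: "nat \<Rightarrow> 'm \<Rightarrow> 'a"
    and \<eta> :: "'a \<Rightarrow> real"
    and x :: 'a
  assumes prob: "prob_space M"
    and meas_Y: "\<And>i. Y i \<in> measurable M borel"
    and indep: "prob_space.indep_vars M (\<lambda>_. borel) Y UNIV"
    and ident: "\<And>i. distr M borel (Y i) = distr M borel (Y 0)"
    and supp: "\<And>r. r > 0 \<Longrightarrow> measure M {\<omega> \<in> space M. Y 0 \<omega> \<in> cball x r} > 0"
    and eta_meas: "\<eta> \<in> borel_measurable borel"
    and eta_bdd: "\<exists>B. \<forall>y. \<bar>\<eta> y\<bar> \<le> B"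
    and NN_meas: "\<And>m. m \<ge> 1 \<Longrightarrow> NN m \<in> measurable M borel"
    and NN_in: "\<And>m \<omega>. m \<ge> 1 \<Longrightarrow> \<omega> \<in> space M \<Longrightarrow> \<exists>i\<in>{1..m}. NN m \<omega> = Y i \<omega>"
    and NN_min: "\<And>m \<omega> i. m \<ge> 1 \<Longrightarrow> \<omega> \<in> space M \<Longrightarrow> i \<in> {1..m} \<Longrightarrow>
                   dist x (NN m \<omega>) \<le> dist x (Y i \<omega>)"
    and condB: "\<exists>C>0. \<exists>R>0. \<exists>M0::nat. \<forall>r m. 0 < r \<and> r < R \<and> m \<ge> M0 \<and> m \<ge> 1 \<and>
                   measure M {\<omega> \<in> space M. Y 0 \<omega> \<in> sphere x r} > 0 \<longrightarrow>
                   (prob_space.expectation M (\<lambda>\<omega>. indicator (sphere x r) (NN m \<omega>) * \<bar>\<eta> (NN m \<omega>) - \<eta> x\<bar>)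
                      / measure M {\<omega> \<in> space M. NN m \<omega> \<in> sphere x r})
                   \<le> C * (prob_space.expectation M (\<lambda>\<omega>. indicator (sphere x r) (Y 0 \<omega>) * \<bar>\<eta> (Y 0 \<omega>) - \<eta> x\<bar>)
                      / measure M {\<omega> \<in> space M. Y 0 \<omega> \<in> sphere x r})"
    and lebesgue: "((\<lambda>r. prob_space.expectation M (\<lambda>\<omega>. indicator (cball x r) (Y 0 \<omega>) * \<bar>\<eta> (Y 0 \<omega>) - \<eta> x\<bar>)
                      / measure M {\<omega> \<in> space M. Y 0 \<omega> \<in> cball x r}) \<longlongrightarrow> 0) (at_right 0)"
  shows "(\<lambda>m. prob_space.expectation M (\<lambda>\<omega>. \<bar>\<eta> (NN m \<omega>) - \<eta> x\<bar>)) \<longlonglongrightarrow> 0"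
proof -
  obtain B where "\<And>y. \<bar>\<eta> y\<bar> \<le> B" using eta_bdd by blast
  then interpret nearest_neighbor M Y NN \<eta> x B
    using NN_in NN_min
    by (intro nearest_neighbor.intro nearest_neighbor_axioms.intro prob meas_Y indep ident eta_meas NN_meas) auto
  show ?thesis by (rule expectation_err_NN_tendsto_0[OF condB supp lebesgue])
qed

end
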